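(* Let $d\ge 2$, $\varepsilon\in(0,1)$, $s=1+\varepsilon$, and let $x,z\in\mathcal X$. Then: (1) The following deterministic inequality holds: $$\varepsilon-\delta_2(d,\varepsilon)\;\le\;K_s(x,z)-\bigl(1-d_G(x,z)\bigr)\;\le\;\varepsilon+\delta_1(d,\varepsilon),$$ where $$\delta_1(d,\varepsilon)=\frac{e^{-d\varepsilon^2/16}}{\sqrt d}-\frac12\,\frac{e^{-\varepsilon d/2}(1+\varepsilon)^{d/2}}{\sqrt d},\qquad \delta_2(d,\varepsilon)=\frac{e^{-d\varepsilon^2/16}}{\sqrt d}+(1+\varepsilon)e^{-d\varepsilon^2/8}.$$ (2) For every fixed $\varepsilon\in(0,1)$, $\delta_1(d,\varepsilon)\to0$ and $\delta_2(d,\varepsilon)\to0$ as $d\to\infty$, so that $K_s(x,z)-\bigl(s-d_G(x,z)\bigr)\to 0$ as $d\to\infty$. (3) $K_s$ is symmetric and positive semi-definite on $\mathcal X$, and it is $G$-invariant: $K_s(gx,g'z)=K_s(x,z)$ for all $g,g'\in G$, $x,z\in\mathcal X$.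
   Context: Let $\mathcal X\subset\mathbb S^{d-1}$ (unit sphere of $\mathbb R^d$). Let $G$ be a compact group acting on $\mathbb R^d$ by orthogonal (unitary) linear maps, with normalized Haar measure $\mu$. Fix $\varepsilon\in(0,1)$ and set $s=1+\varepsilon$. A random template $t$ is drawn as follows: draw $\nu\sim\mathcal N(0,\tfrac1d I_d)$; set $t=\nu$ if $\|\nu\|_2^2<1+\varepsilon$, and $t=\perp$ (a null template) otherwise. For $x\in\mathbb R^d$, a template $t\ne\perp$ and $\tau\in\mathbb R$, define $\psi(x,t,\tau)=\mu(\{g\in G:\langle x,gt\rangle\le\tau\})$ (the CDF of $\langle x,gt\rangle$ with $g\sim\mu$), and by convention $\psi(x,\perp,\tau)=0$. Define the kernel $$K_s(x,z)=\mathbb E_t\int_{-s}^{s}\psi(x,t,\tau)\,\psi(z,t,\tau)\,d\tau,$$ and the orbit distance $$d_G(x,z)=\frac{1}{\sqrt{2\pi d}}\int_G\int_G\|gx-g'z\|_2\,d\mu(g)\,d\mu(g').$$ *)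

theory Defs
  imports "HOL-Probability.Probability"
begin

text \<open>The dimension d is CARD('n); vectors of R^d are real^'n.
  The compact group G is represented by its image in O(d): a compact set of
  orthogonal matrices closed under identity, products and inverses (transposes),
  and mu is its normalized Haar measure: a Borel probability measure on G that is
  invariant under left translation.\<close>

definition orth_group_haar :: "(real^'n^'n) set \<Rightarrow> (real^'n^'n) measure \<Rightarrow> bool" where
  "orth_group_haar G \<mu> \<longleftrightarrow>
     compact G \<and> (\<forall>g\<in>G. orthogonal_matrix g) \<and> mat 1 \<in> G \<and>
     (\<forall>g\<in>G. \<forall>h\<in>G. g ** h \<in> G) \<and> (\<forall>g\<in>G. transpose g \<in> G) \<and>
     prob_space \<mu> \<and> space \<mu> = G \<and> sets \<mu> = sets (restrict_space borel G) \<and>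
     (\<forall>g\<in>G. \<forall>A\<in>sets \<mu>. emeasure \<mu> ((\<lambda>h. g ** h) -` A \<inter> G) = emeasure \<mu> A)"

definition gauss_tmpl :: "(real^'n) measure" where
  "gauss_tmpl = density lborel (\<lambda>v. ennreal
      ((real CARD('n) / (2 * pi)) powr (real CARD('n) / 2) *
       exp (- real CARD('n) * (norm v)\<^sup>2 / 2)))"

definition template :: "real \<Rightarrow> real^'n \<Rightarrow> (real^'n) option" where
  "template \<epsilon> \<nu> = (if (norm \<nu>)\<^sup>2 < 1 + \<epsilon> then Some \<nu> else None)"

fun psi :: "(real^'n^'n) measure \<Rightarrow> real^'n \<Rightarrow> (real^'n) option \<Rightarrow> real \<Rightarrow> real" where
  "psi \<mu> x None \<tau> = 0"
| "psi \<mu> x (Some t) \<tau> = measure \<mu> {g \<in> space \<mu>. x \<bullet> (g *v t) \<le> \<tau>}"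

definition K_s :: "(real^'n^'n) measure \<Rightarrow> real \<Rightarrow> real^'n \<Rightarrow> real^'n \<Rightarrow> real" where
  "K_s \<mu> \<epsilon> x z = (\<integral>\<nu>. (LBINT \<tau>=-(1+\<epsilon>)..(1+\<epsilon>).
        psi \<mu> x (template \<epsilon> \<nu>) \<tau> * psi \<mu> z (template \<epsilon> \<nu>) \<tau>) \<partial>gauss_tmpl)"

definition d_G :: "(real^'n^'n) measure \<Rightarrow> real^'n \<Rightarrow> real^'n \<Rightarrow> real" where
  "d_G \<mu> x z = 1 / sqrt (2 * pi * real CARD('n)) *
      (\<integral>g. (\<integral>g'. norm (g *v x - g' *v z) \<partial>\<mu>) \<partial>\<mu>)"

definition delta1 :: "nat \<Rightarrow> real \<Rightarrow> real" where
  "delta1 d \<epsilon> = exp (- real d * \<epsilon>\<^sup>2 / 16) / sqrt (real d)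
      - 1/2 * (exp (- \<epsilon> * real d / 2) * (1 + \<epsilon>) powr (real d / 2)) / sqrt (real d)"

definition delta2 :: "nat \<Rightarrow> real \<Rightarrow> real" where
  "delta2 d \<epsilon> = exp (- real d * \<epsilon>\<^sup>2 / 16) / sqrt (real d)
      + (1 + \<epsilon>) * exp (- real d * \<epsilon>\<^sup>2 / 8)"

end

theory Submission
  imports Defs
begin

text \<open>
  For a fixed template \<open>t\<close>, \<open>\<psi>(x,t,\<cdot>) \<psi>(z,t,\<cdot>)\<close> is the distribution function of
  \<open>max \<langle>x,gt\<rangle> \<langle>z,g't\<rangle>\<close> with \<open>g, g'\<close> independent and Haar distributed, so by the layer-cake
  formula its integral over \<open>[-s,s]\<close> is \<open>s - E max \<langle>x,gt\<rangle> \<langle>z,g't\<rangle>\<close>.  Writing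
  \<open>\<langle>x,g\<nu>\<rangle> = \<langle>g\<^sup>Tx,\<nu>\<rangle>\<close> and \<open>max a b = (a+b)/2 + |a-b|/2\<close>, the Gaussian average over the symmetric
  set \<open>|\<nu>|\<^sup>2 < s\<close> kills the linear part, and the absolute part, up to the tail \<open>|\<nu>|\<^sup>2 \<ge> s\<close>,
  is \<open>E |\<langle>v,\<nu>\<rangle>| = |v| sqrt (2 / (\<pi> d))\<close> with \<open>v = (g\<^sup>Tx - g'\<^sup>Tz)/2\<close>; averaged over \<open>g, g'\<close> this
  is \<open>d_G(x,z)\<close>, because Haar measure is invariant under \<open>g \<mapsto> g\<^sup>T\<close>.  The two error terms, the
  mass \<open>s P(|\<nu>|\<^sup>2 \<ge> s)\<close> and the tail moment \<open>E[|\<langle>v,\<nu>\<rangle>|; |\<nu>|\<^sup>2 \<ge> s]\<close>, are controlled by a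
  Chernoff bound and an exponential moment bound, giving \<open>\<delta>\<^sub>2\<close> and \<open>\<delta>\<^sub>1\<close>.
  Positive semi-definiteness holds because \<open>\<Sum>\<^sub>i\<^sub>j c\<^sub>i c\<^sub>j K\<^sub>s(x\<^sub>i,x\<^sub>j)\<close> averages
  \<open>\<integral> (\<Sum>\<^sub>i c\<^sub>i \<psi>(x\<^sub>i,t,\<tau>))\<^sup>2 d\<tau>\<close>, and invariance follows from left invariance of \<mu>.
\<close>

section \<open>Gaussian templates\<close>

text \<open>\<open>gauss_tmpl\<close> is the image of the product of \<open>d\<close> independent \<open>N(0, 1/d)\<close> coordinates;
  the \<open>max 1\<close> only keeps \<open>coord_sd\<close> positive at the irrelevant value \<open>d = 0\<close>.\<close>

definition coord_sd :: "nat \<Rightarrow> real" where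
  "coord_sd d = 1 / sqrt (real (max 1 d))"

definition coord_normal :: "nat \<Rightarrow> real measure" where
  "coord_normal d = density lborel (normal_density 0 (coord_sd d))"

definition vec_of_coords :: "('a::euclidean_space \<Rightarrow> real) \<Rightarrow> 'a" where
  "vec_of_coords \<omega> = (\<Sum>b\<in>Basis. \<omega> b *\<^sub>R b)"

definition coord_space :: "'n itself \<Rightarrow> ((real^'n) \<Rightarrow> real) measure" where
  "coord_space _ = PiM (Basis::(real^'n) set) (\<lambda>_. coord_normal CARD('n))"

lemma coord_sd_pos: "coord_sd d > 0"
  by (simp add: coord_sd_def)

lemma coord_sd_card: "coord_sd CARD('n::finite) = 1 / sqrt (real CARD('n))"
  by (simp add: coord_sd_def)

lemma prob_space_coord_normal: "prob_space (coord_normal d)"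
  unfolding coord_normal_def by (rule prob_space_normal_density) (rule coord_sd_pos)

lemma sets_coord_normal [simp, measurable_cong]: "sets (coord_normal d) = sets borel"
  by (simp add: coord_normal_def)

lemma space_coord_normal [simp]: "space (coord_normal d) = UNIV"
  by (simp add: coord_normal_def)

lemma product_prob_space_coord_normal: "product_prob_space (\<lambda>_. coord_normal d)"
  by (simp add: product_prob_space_def product_sigma_finite_def prob_space_coord_normal
      prob_space_imp_sigma_finite product_prob_space_axioms_def)

lemma measurable_vec_of_coords [measurable]:
  "(vec_of_coords :: ('a::euclidean_space \<Rightarrow> real) \<Rightarrow> 'a) \<in> measurable (PiM Basis M) borel"
  if "\<And>b. sets (M b) = sets borel"
  unfolding vec_of_coords_def using that by measurable

lemma inner_vec_of_coords_Basis: "b \<in> Basis \<Longrightarrow> vec_of_coords \<omega> \<bullet> b = \<omega> (b::'a::euclidean_space)"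
  unfolding vec_of_coords_def by (simp add: inner_sum_left inner_Basis if_distrib cong: if_cong)

lemma inner_vec_of_coords: "w \<bullet> vec_of_coords \<omega> = (\<Sum>b\<in>Basis. (w \<bullet> b) * \<omega> (b::'a::euclidean_space))"
  unfolding vec_of_coords_def by (simp add: inner_sum_right mult.commute)

lemma power2_norm_eq_sum_Basis: "(norm (v::'a::euclidean_space))\<^sup>2 = (\<Sum>b\<in>Basis. (v \<bullet> b)\<^sup>2)"
proof -
  have "(norm v)\<^sup>2 = (\<Sum>b\<in>Basis. (v \<bullet> b) * (v \<bullet> b))"
    by (simp add: power2_norm_eq_inner euclidean_inner[of v v])
  then show ?thesis by (simp add: power2_eq_square)
qed

lemma power2_norm_vec_of_coords:
  "(norm (vec_of_coords \<omega> :: 'a::euclidean_space))\<^sup>2 = (\<Sum>b\<in>Basis. (\<omega> b)\<^sup>2)"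
  by (simp add: power2_norm_eq_sum_Basis inner_vec_of_coords_Basis)

lemma gauss_density_eq_prod:
  fixes v :: "real^'n"
  shows "(real CARD('n) / (2 * pi)) powr (real CARD('n) / 2) * exp (- real CARD('n) * (norm v)\<^sup>2 / 2)
       = (\<Prod>b\<in>Basis. normal_density 0 (coord_sd CARD('n)) (v \<bullet> b))"
proof -
  define d where "d = real CARD('n)"
  have d: "d > 0" unfolding d_def by simp
  have coord: "normal_density 0 (coord_sd CARD('n)) y = sqrt (d / (2*pi)) * exp (- d * y\<^sup>2 / 2)" for y
    using d unfolding normal_density_def coord_sd_card d_def[symmetric]
    by (simp add: power_divide real_sqrt_divide real_sqrt_mult field_simps)
  have "(\<Prod>b\<in>(Basis::(real^'n) set). normal_density 0 (coord_sd CARD('n)) (v \<bullet> b))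
      = sqrt (d / (2*pi)) ^ CARD('n) * (\<Prod>b\<in>(Basis::(real^'n) set). exp (- d * (v \<bullet> b)\<^sup>2 / 2))"
    by (simp add: coord prod.distrib)
  also have "sqrt (d / (2*pi)) ^ CARD('n) = (d / (2 * pi)) powr (d / 2)"
    using d by (simp add: d_def powr_half_sqrt[symmetric] powr_realpow[symmetric] powr_powr)
  also have "(\<Prod>b\<in>(Basis::(real^'n) set). exp (- d * (v \<bullet> b)\<^sup>2 / 2)) = exp (- d * (norm v)\<^sup>2 / 2)"
    by (simp add: exp_sum[symmetric] power2_norm_eq_sum_Basis sum_divide_distrib sum_distrib_left)
  finally show ?thesis by (simp add: d_def)
qed

lemma density_PiM_lborel_eq_coord_space:
  "density (PiM (Basis::(real^'n) set) (\<lambda>_. lborel))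
      (\<lambda>\<omega>. ennreal (\<Prod>b\<in>Basis. normal_density 0 (coord_sd CARD('n)) (\<omega> b)))
   = coord_space TYPE('n)" (is "?D = _")
  unfolding coord_space_def
proof (rule product_sigma_finite.PiM_eqI)
  show "product_sigma_finite (\<lambda>_. coord_normal CARD('n))"
    using product_prob_space_coord_normal unfolding product_prob_space_def by blast
  show "sets ?D = sets (PiM (Basis::(real^'n) set) (\<lambda>_. coord_normal CARD('n)))"
    by (simp add: sets_PiM_cong[OF refl, of _ "\<lambda>_. coord_normal CARD('n)" "\<lambda>_. lborel"])
  fix A assume A: "\<And>i. i \<in> (Basis::(real^'n) set) \<Longrightarrow> A i \<in> sets (coord_normal CARD('n))"
  have "emeasure ?D (Pi\<^sub>E Basis A)
    = (\<integral>\<^sup>+\<omega>. (\<Prod>b\<in>Basis. ennreal (normal_density 0 (coord_sd CARD('n)) (\<omega> b)) * indicator (A b) (\<omega> b))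
        \<partial>PiM (Basis::(real^'n) set) (\<lambda>_. lborel))"
    using A by (subst emeasure_density)
      (auto intro!: sets_PiM_I_finite nn_integral_cong simp: prod_ennreal[symmetric] prod.distrib
        indicator_def PiE_iff space_PiM split: if_split)
  also have "\<dots> = (\<Prod>b\<in>Basis. (\<integral>\<^sup>+y. ennreal (normal_density 0 (coord_sd CARD('n)) y) * indicator (A b) y \<partial>lborel))"
    using A by (subst product_sigma_finite.product_nn_integral_prod)
      (auto simp: product_sigma_finite_def lborel.sigma_finite_measure_axioms)
  also have "\<dots> = (\<Prod>b\<in>Basis. emeasure (coord_normal CARD('n)) (A b))"
    using A by (intro prod.cong refl) (simp add: coord_normal_def emeasure_density)
  finally show "emeasure ?D (Pi\<^sub>E Basis A) = (\<Prod>b\<in>Basis. emeasure (coord_normal CARD('n)) (A b))" .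
qed simp

lemma gauss_tmpl_eq_distr: "(gauss_tmpl :: (real^'n) measure) = distr (coord_space TYPE('n::finite)) borel vec_of_coords"
proof -
  have "(gauss_tmpl :: (real^'n) measure) = density (distr (PiM (Basis::(real^'n) set) (\<lambda>_. lborel)) borel vec_of_coords)
     (\<lambda>v. ennreal ((real CARD('n) / (2 * pi)) powr (real CARD('n) / 2) * exp (- real CARD('n) * (norm v)\<^sup>2 / 2)))"
    unfolding gauss_tmpl_def vec_of_coords_def by (simp add: lborel_eq[symmetric])
  also have "\<dots> = distr (density (PiM (Basis::(real^'n) set) (\<lambda>_. lborel))
     (\<lambda>\<omega>. ennreal ((real CARD('n) / (2 * pi)) powr (real CARD('n) / 2) *
       exp (- real CARD('n) * (norm (vec_of_coords \<omega> :: real^'n))\<^sup>2 / 2)))) borel vec_of_coords"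
    by (rule density_distr) auto
  also have "(\<lambda>\<omega>. ennreal ((real CARD('n) / (2 * pi)) powr (real CARD('n) / 2) *
       exp (- real CARD('n) * (norm (vec_of_coords \<omega> :: real^'n))\<^sup>2 / 2)))
     = (\<lambda>\<omega>. ennreal (\<Prod>b\<in>(Basis::(real^'n) set). normal_density 0 (coord_sd CARD('n)) (\<omega> b)))"
    by (rule ext, subst gauss_density_eq_prod, simp add: inner_vec_of_coords_Basis cong: prod.cong)
  finally show ?thesis by (simp add: density_PiM_lborel_eq_coord_space)
qed

lemma prob_space_coord_space: "prob_space (coord_space TYPE('n::finite))"
  unfolding coord_space_def by (intro prob_space_PiM prob_space_coord_normal)

lemma sets_coord_space [measurable_cong]:
  "sets (coord_space TYPE('n::finite)) = sets (PiM (Basis::(real^'n) set) (\<lambda>_. borel))"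
  unfolding coord_space_def by (intro sets_PiM_cong) simp_all

lemma space_coord_space: "space (coord_space TYPE('n::finite)) = (Basis::(real^'n) set) \<rightarrow>\<^sub>E UNIV"
  by (simp add: coord_space_def space_PiM)

lemma measurable_vec_of_coords_coord_space [measurable]:
  "vec_of_coords \<in> measurable (coord_space TYPE('n::finite)) (borel :: (real^'n) measure)"
  unfolding coord_space_def by (rule measurable_vec_of_coords) simp

lemma prob_space_gauss_tmpl: "prob_space (gauss_tmpl :: (real^'n) measure)"
  unfolding gauss_tmpl_eq_distr
  by (intro prob_space.prob_space_distr prob_space_coord_space measurable_vec_of_coords_coord_space)

lemma sets_gauss_tmpl [simp, measurable_cong]: "sets (gauss_tmpl :: (real^'n) measure) = sets borel"
  by (simp add: gauss_tmpl_def)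

lemma space_gauss_tmpl [simp]: "space (gauss_tmpl :: (real^'n) measure) = UNIV"
  by (simp add: gauss_tmpl_def)

lemma distr_coord_space_component:
  assumes "b \<in> (Basis::(real^'n::finite) set)"
  shows "distr (coord_space TYPE('n)) borel (\<lambda>\<omega>. \<omega> b) = coord_normal CARD('n)"
proof -
  have "distr (coord_space TYPE('n)) borel (\<lambda>\<omega>. \<omega> b)
      = distr (coord_space TYPE('n)) (coord_normal CARD('n)) (\<lambda>\<omega>. \<omega> b)"
    by (rule distr_cong) auto
  also have "\<dots> = coord_normal CARD('n)"
    unfolding coord_space_def by (rule distr_PiM_component[OF prob_space_coord_normal assms])
  finally show ?thesis .
qed

lemma indep_vars_coord_space:
  "prob_space.indep_vars (coord_space TYPE('n::finite)) (\<lambda>_. borel) (\<lambda>b \<omega>. \<omega> b) (Basis::(real^'n) set)"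
proof -
  interpret P: prob_space "coord_space TYPE('n)" by (rule prob_space_coord_space)
  have "distr (coord_space TYPE('n)) (Pi\<^sub>M Basis (\<lambda>i. borel)) (\<lambda>x. \<lambda>i\<in>(Basis::(real^'n) set). x i)
      = distr (coord_space TYPE('n)) (coord_space TYPE('n)) (\<lambda>x. x)"
    by (rule distr_cong) (auto simp: sets_coord_space space_coord_space)
  also have "\<dots> = Pi\<^sub>M Basis (\<lambda>i. distr (coord_space TYPE('n)) borel (\<lambda>\<omega>. \<omega> i))"
    by (simp add: distr_coord_space_component cong: PiM_cong) (simp add: coord_space_def)
  finally show ?thesis
    by (subst P.indep_vars_iff_distr_eq_PiM') (auto simp: sets_coord_space)
qed

lemma distributed_inner_vec_of_coords:
  fixes w :: "real^'n::finite"
  assumes w: "w \<noteq> 0"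
  shows "distributed (coord_space TYPE('n)) lborel (\<lambda>\<omega>. w \<bullet> vec_of_coords \<omega>)
           (normal_density 0 (norm w * coord_sd CARD('n)))"
proof -
  interpret P: prob_space "coord_space TYPE('n)" by (rule prob_space_coord_space)
  define I where "I = {b\<in>(Basis::(real^'n) set). w \<bullet> b \<noteq> 0}"
  have I: "finite I" "I \<subseteq> Basis" unfolding I_def by auto
  have "I \<noteq> {}"
    using w euclidean_eqI[of w 0] unfolding I_def by auto
  moreover have "P.indep_vars (\<lambda>_. borel) (\<lambda>b \<omega>. (w \<bullet> b) * \<omega> b) I"
    using P.indep_vars_compose2[OF indep_vars_coord_space, of "\<lambda>b y. (w \<bullet> b) * y" "\<lambda>_. borel"]
    by (rule P.indep_vars_subset[OF _ I(2)]) auto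
  moreover have "distributed (coord_space TYPE('n)) lborel (\<lambda>\<omega>. (w \<bullet> b) * \<omega> b)
      (normal_density 0 (\<bar>w \<bullet> b\<bar> * coord_sd CARD('n)))" if "b \<in> I" for b
  proof -
    have "distributed (coord_space TYPE('n)) lborel (\<lambda>\<omega>. \<omega> b) (normal_density 0 (coord_sd CARD('n)))"
      using that I distr_coord_space_component[of b]
      by (auto simp: distributed_def coord_normal_def coord_space_def cong: distr_cong)
    from P.normal_density_affine[OF this coord_sd_pos, of "w \<bullet> b" 0] that
    show ?thesis unfolding I_def by auto
  qed
  ultimately have "distributed (coord_space TYPE('n)) lborel (\<lambda>x. \<Sum>i\<in>I. (w \<bullet> i) * x i)
      (normal_density (\<Sum>i\<in>I. 0) (sqrt (\<Sum>i\<in>I. (\<bar>w \<bullet> i\<bar> * coord_sd CARD('n))\<^sup>2)))"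
    using coord_sd_pos by (intro P.sum_indep_normal[OF I(1)]) (auto simp: I_def)
  moreover have "(\<lambda>x. \<Sum>i\<in>I. (w \<bullet> i) * x i) = (\<lambda>\<omega>. w \<bullet> vec_of_coords \<omega>)"
    unfolding inner_vec_of_coords by (rule ext, rule sum.mono_neutral_left) (auto simp: I_def)
  moreover have "(\<Sum>i\<in>I. (\<bar>w \<bullet> i\<bar> * coord_sd CARD('n))\<^sup>2) = (norm w * coord_sd CARD('n))\<^sup>2"
  proof -
    have "(\<Sum>i\<in>I. (w \<bullet> i)\<^sup>2) = (\<Sum>i\<in>Basis. (w \<bullet> i)\<^sup>2)"
      by (rule sum.mono_neutral_left) (auto simp: I_def)
    then show ?thesis
      by (simp add: power_mult_distrib sum_distrib_right[symmetric] power2_norm_eq_sum_Basis)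
  qed
  ultimately show ?thesis using coord_sd_pos[of "CARD('n)"] by simp
qed

lemma gauss_tmpl_integral_inner:
  fixes w :: "real^'n::finite" and h :: "real \<Rightarrow> real"
  assumes w: "w \<noteq> 0" and h[measurable]: "h \<in> borel_measurable borel"
  shows "(\<integral>\<nu>. h (w \<bullet> \<nu>) \<partial>gauss_tmpl)
           = (\<integral>y. normal_density 0 (norm w * coord_sd CARD('n)) y * h y \<partial>lborel)"
    and "integrable gauss_tmpl (\<lambda>\<nu>. h (w \<bullet> \<nu>))
           \<longleftrightarrow> integrable lborel (\<lambda>y. normal_density 0 (norm w * coord_sd CARD('n)) y * h y)"
proof -
  note D = distributed_inner_vec_of_coords[OF w]
  have "(\<integral>\<nu>. h (w \<bullet> \<nu>) \<partial>gauss_tmpl) = (\<integral>\<omega>. h (w \<bullet> vec_of_coords \<omega>) \<partial>coord_space TYPE('n))"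
    unfolding gauss_tmpl_eq_distr by (rule integral_distr) auto
  also have "\<dots> = (\<integral>y. normal_density 0 (norm w * coord_sd CARD('n)) y * h y \<partial>lborel)"
    by (rule distributed_integral[OF D, symmetric]) auto
  finally show "(\<integral>\<nu>. h (w \<bullet> \<nu>) \<partial>gauss_tmpl)
           = (\<integral>y. normal_density 0 (norm w * coord_sd CARD('n)) y * h y \<partial>lborel)" .
  have "integrable gauss_tmpl (\<lambda>\<nu>. h (w \<bullet> \<nu>))
      \<longleftrightarrow> integrable (coord_space TYPE('n)) (\<lambda>\<omega>. h (w \<bullet> vec_of_coords \<omega>))"
    unfolding gauss_tmpl_eq_distr by (rule integrable_distr_eq) auto
  also have "\<dots> \<longleftrightarrow> integrable lborel (\<lambda>y. normal_density 0 (norm w * coord_sd CARD('n)) y * h y)"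
    by (rule distributed_integrable[OF D, symmetric]) auto
  finally show "integrable gauss_tmpl (\<lambda>\<nu>. h (w \<bullet> \<nu>))
           \<longleftrightarrow> integrable lborel (\<lambda>y. normal_density 0 (norm w * coord_sd CARD('n)) y * h y)" .
qed

lemma gauss_tmpl_abs_inner:
  fixes w :: "real^'n::finite"
  shows gauss_tmpl_integral_abs_inner:
      "(\<integral>\<nu>. \<bar>w \<bullet> \<nu>\<bar> \<partial>gauss_tmpl) = norm w * coord_sd CARD('n) * sqrt (2 / pi)"
    and gauss_tmpl_integrable_abs_inner: "integrable gauss_tmpl (\<lambda>\<nu>. \<bar>w \<bullet> \<nu>\<bar>)"
proof -
  have "(\<integral>\<nu>. \<bar>w \<bullet> \<nu>\<bar> \<partial>gauss_tmpl) = norm w * coord_sd CARD('n) * sqrt (2 / pi)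
        \<and> integrable gauss_tmpl (\<lambda>\<nu>. \<bar>w \<bullet> \<nu>\<bar>)"
  proof (cases "w = 0")
    case False
    then have \<sigma>: "norm w * coord_sd CARD('n) > 0" using coord_sd_pos by simp
    show ?thesis
      using gauss_tmpl_integral_inner[OF False, of abs]
        integral_normal_moment_abs_odd[OF \<sigma>, of 0 0] integrable_normal_moment_abs[OF \<sigma>, of 0 1]
      by simp
  qed simp
  then show "(\<integral>\<nu>. \<bar>w \<bullet> \<nu>\<bar> \<partial>gauss_tmpl) = norm w * coord_sd CARD('n) * sqrt (2 / pi)"
    and "integrable gauss_tmpl (\<lambda>\<nu>. \<bar>w \<bullet> \<nu>\<bar>)" by auto
qed

lemma lborel_integral_uminus:
  fixes f :: "'a::euclidean_space \<Rightarrow> real"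
  assumes [measurable]: "f \<in> borel_measurable borel"
  shows "(\<integral>x. f (- x) \<partial>lborel) = (\<integral>x. f x \<partial>lborel)"
proof -
  have "lborel = density (distr lborel borel (\<lambda>x::'a. - x)) (\<lambda>_. 1)"
    using lborel_affine[of "-1" "0::'a"] by simp
  then have "(\<integral>x. f x \<partial>lborel) = (\<integral>x. f x \<partial>distr lborel borel (\<lambda>x::'a. - x))"
    by (simp add: density_1)
  also have "\<dots> = (\<integral>x. f (- x) \<partial>lborel)"
    by (rule integral_distr) auto
  finally show ?thesis by simp
qed

lemma gauss_tmpl_integral_odd:
  fixes h :: "real^'n::finite \<Rightarrow> real"
  assumes [measurable]: "h \<in> borel_measurable borel" and odd: "\<And>v. h (- v) = - h v"
  shows "(\<integral>\<nu>. h \<nu> \<partial>gauss_tmpl) = 0"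
proof -
  define g :: "real^'n \<Rightarrow> real" where "g v = (real CARD('n) / (2 * pi)) powr (real CARD('n) / 2) *
       exp (- real CARD('n) * (norm v)\<^sup>2 / 2)" for v
  have [measurable]: "g \<in> borel_measurable borel" unfolding g_def by measurable
  have "(\<integral>\<nu>. h \<nu> \<partial>gauss_tmpl) = (\<integral>x. g x * h x \<partial>lborel)"
    unfolding gauss_tmpl_def g_def[symmetric] by (subst integral_density) (auto simp: g_def)
  also have "\<dots> = (\<integral>x. g (- x) * h (- x) \<partial>lborel)"
    by (rule lborel_integral_uminus[symmetric]) measurable
  also have "\<dots> = - (\<integral>x. g x * h x \<partial>lborel)"
    by (simp add: g_def odd)
  finally show ?thesis
    using \<open>(\<integral>\<nu>. h \<nu> \<partial>gauss_tmpl) = (\<integral>x. g x * h x \<partial>lborel)\<close> by simp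
qed

lemma normal_density_mult_exp_square:
  fixes d s y :: real
  assumes d: "d > 0" and s: "s > 0"
  shows "normal_density 0 (1 / sqrt d) y * exp (d * (s - 1) / (2 * s) * y\<^sup>2)
       = sqrt s * normal_density 0 (sqrt s * (1 / sqrt d)) y"
proof -
  have e: "exp (-(y - 0)\<^sup>2 / (2 * (1 / sqrt d)\<^sup>2)) * exp (d * (s - 1) / (2 * s) * y\<^sup>2)
      = exp (-(y - 0)\<^sup>2 / (2 * (sqrt s * (1 / sqrt d))\<^sup>2))"
    unfolding exp_add[symmetric] using d s
    by (intro arg_cong[where f=exp]) (simp add: power_mult_distrib power_divide field_simps)
  have c: "1 / sqrt (2 * (pi * (1 / sqrt d)\<^sup>2)) = sqrt s * (1 / sqrt (2 * (pi * (sqrt s * (1 / sqrt d))\<^sup>2)))"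
    using d s by (simp add: power_mult_distrib power_divide real_sqrt_mult real_sqrt_divide field_simps)
  show ?thesis
    unfolding normal_density_def by (simp only: mult.assoc e, simp only: c mult.assoc)
qed

lemma nn_integral_coord_normal_exp_square:
  assumes s: "s > 0"
  shows "(\<integral>\<^sup>+y. ennreal (exp (real CARD('n::finite) * (s - 1) / (2 * s) * y\<^sup>2)) \<partial>coord_normal CARD('n))
       = ennreal (sqrt s)"
proof -
  define d where "d = real CARD('n)"
  have d: "d > 0" unfolding d_def by simp
  have \<sigma>: "sqrt s * (1 / sqrt d) > 0" using s d by simp
  have "(\<integral>\<^sup>+y. ennreal (exp (d * (s - 1) / (2 * s) * y\<^sup>2)) \<partial>coord_normal CARD('n))
      = (\<integral>\<^sup>+y. ennreal (normal_density 0 (1 / sqrt d) y) * ennreal (exp (d * (s - 1) / (2 * s) * y\<^sup>2)) \<partial>lborel)"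
    unfolding coord_normal_def coord_sd_card d_def by (subst nn_integral_density) auto
  also have "\<dots> = (\<integral>\<^sup>+y. ennreal (sqrt s) * ennreal (normal_density 0 (sqrt s * (1 / sqrt d)) y) \<partial>lborel)"
    using normal_density_mult_exp_square[OF d s] s
    by (intro nn_integral_cong) (simp add: ennreal_mult'[symmetric])
  also have "\<dots> = ennreal (sqrt s) * (\<integral>\<^sup>+y. ennreal (normal_density 0 (sqrt s * (1 / sqrt d)) y) \<partial>lborel)"
    by (rule nn_integral_cmult) simp
  also have "(\<integral>\<^sup>+y. ennreal (normal_density 0 (sqrt s * (1 / sqrt d)) y) \<partial>lborel) = 1"
    using integrable_normal_density[OF \<sigma>] integral_normal_density[OF \<sigma>]
    by (subst nn_integral_eq_integral) auto
  finally show ?thesis by (simp add: d_def)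
qed

text \<open>Chernoff bound with the optimal parameter \<open>l = d (s - 1) / (2 s)\<close>.\<close>

lemma gauss_tmpl_norm_tail:
  assumes s: "s > 1"
  shows "measure (gauss_tmpl :: (real^'n::finite) measure) {\<nu>. s \<le> (norm \<nu>)\<^sup>2}
      \<le> s powr (real CARD('n) / 2) * exp (- real CARD('n) * (s - 1) / 2)"
proof -
  define d where "d = real CARD('n)"
  define l where "l = d * (s - 1) / (2 * s)"
  have l: "l \<ge> 0" using s unfolding l_def d_def by simp
  have ls: "l * s = d * (s - 1) / 2" unfolding l_def using s by (simp add: field_simps)
  have "{\<nu>::real^'n. s \<le> (norm \<nu>)\<^sup>2} \<in> sets borel" by measurable
  then have "emeasure (gauss_tmpl :: (real^'n) measure) {\<nu>. s \<le> (norm \<nu>)\<^sup>2}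
      = (\<integral>\<^sup>+\<nu>. indicator {\<nu>::real^'n. s \<le> (norm \<nu>)\<^sup>2} \<nu> \<partial>gauss_tmpl)"
    by simp
  also have "\<dots> = (\<integral>\<^sup>+\<omega>. indicator {\<nu>::real^'n. s \<le> (norm \<nu>)\<^sup>2} (vec_of_coords \<omega>) \<partial>coord_space TYPE('n))"
    unfolding gauss_tmpl_eq_distr by (rule nn_integral_distr) measurable
  also have "\<dots> \<le> (\<integral>\<^sup>+\<omega>. ennreal (exp (- (l * s))) *
        (\<Prod>b\<in>(Basis::(real^'n) set). ennreal (exp (l * (\<omega> b)\<^sup>2))) \<partial>coord_space TYPE('n))"
  proof (intro nn_integral_mono)
    fix \<omega> :: "real^'n \<Rightarrow> real"
    have "ennreal (exp (- (l * s))) * (\<Prod>b\<in>(Basis::(real^'n) set). ennreal (exp (l * (\<omega> b)\<^sup>2)))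
        = ennreal (exp (l * ((norm (vec_of_coords \<omega> :: real^'n))\<^sup>2 - s)))"
      by (simp add: prod_ennreal ennreal_mult'[symmetric] exp_sum[symmetric] exp_add[symmetric]
           power2_norm_vec_of_coords sum_distrib_left algebra_simps)
    then show "indicator {\<nu>::real^'n. s \<le> (norm \<nu>)\<^sup>2} (vec_of_coords \<omega>)
        \<le> ennreal (exp (- (l * s))) * (\<Prod>b\<in>(Basis::(real^'n) set). ennreal (exp (l * (\<omega> b)\<^sup>2)))"
      using l by (auto simp: indicator_def)
  qed
  also have "\<dots> = ennreal (exp (- (l * s))) *
      (\<Prod>b\<in>(Basis::(real^'n) set). (\<integral>\<^sup>+y. ennreal (exp (l * y\<^sup>2)) \<partial>coord_normal CARD('n)))"
    unfolding coord_space_def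
    using product_prob_space_coord_normal[of "CARD('n)"]
    by (subst nn_integral_cmult, simp, subst product_sigma_finite.product_nn_integral_prod)
      (auto simp: product_prob_space_def)
  also have "\<dots> = ennreal (exp (- (l * s))) * ennreal (sqrt s ^ CARD('n))"
    using nn_integral_coord_normal_exp_square[of s, where 'n='n] s
    by (simp add: l_def d_def ennreal_power)
  also have "sqrt s ^ CARD('n) = s powr (d / 2)"
    using s by (simp add: d_def powr_half_sqrt[symmetric] powr_realpow[symmetric] powr_powr)
  also have "ennreal (exp (- (l * s))) * ennreal (s powr (d / 2))
      = ennreal (s powr (d / 2) * exp (- d * (s - 1) / 2))"
    by (simp add: ls ennreal_mult'[symmetric] mult.commute)
  finally show ?thesis
    using prob_space_gauss_tmpl
    by (subst (asm) finite_measure.emeasure_eq_measure) (auto simp: d_def ennreal_le_iff prob_space_def)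
qed

lemma normal_density_mult_exp_linear:
  fixes t l y :: real
  assumes t: "t > 0"
  shows "normal_density 0 t y * exp (l * y) = exp (l\<^sup>2 * t\<^sup>2 / 2) * normal_density (l * t\<^sup>2) t y"
proof -
  have e: "exp (-(y - 0)\<^sup>2 / (2 * t\<^sup>2)) * exp (l * y)
      = exp (l\<^sup>2 * t\<^sup>2 / 2) * exp (-(y - l * t\<^sup>2)\<^sup>2 / (2 * t\<^sup>2))"
    unfolding exp_add[symmetric] using t
    by (intro arg_cong[where f=exp]) (simp add: power2_eq_square field_simps)
  show ?thesis
    unfolding normal_density_def by (simp only: mult.assoc e mult.left_commute[of "exp (l\<^sup>2 * t\<^sup>2 / 2)"])
qed

lemma max_0_le_exp:
  fixes u l :: real
  assumes l: "l > 0"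
  shows "max 0 u \<le> exp (l * u) / (exp 1 * l)"
proof -
  have "l * u \<le> exp (l * u - 1)" using exp_ge_add_one_self[of "l * u - 1"] by simp
  then have "u \<le> exp (l * u) / (exp 1 * l)" using l by (simp add: exp_diff field_simps)
  then show ?thesis using l by simp
qed

lemma normal_density_excess:
  fixes t s l :: real
  assumes t: "t > 0" and l: "l > 0" and s: "s \<ge> 0"
  shows "integrable lborel (\<lambda>y. normal_density 0 t y * max 0 (\<bar>y\<bar> - s))"
    and "(\<integral>y. normal_density 0 t y * max 0 (\<bar>y\<bar> - s) \<partial>lborel)
        \<le> 2 * exp (l\<^sup>2 * t\<^sup>2 / 2 - l * s) / (exp 1 * l)"
proof -
  have "integrable lborel (\<lambda>y. normal_density 0 t y * \<bar>y\<bar>)"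
    using integrable_normal_moment_abs[OF t, of 0 1] by simp
  then show int: "integrable lborel (\<lambda>y. normal_density 0 t y * max 0 (\<bar>y\<bar> - s))"
    by (rule Bochner_Integration.integrable_bound) (use s in \<open>auto simp: abs_mult intro!: mult_left_mono\<close>)
  define C where "C = exp (- (l * s)) / (exp 1 * l)"
  define E where "E l' y = normal_density 0 t y * exp (l' * y)" for l' y
  have E: "integrable lborel (E l')" "(\<integral>y. E l' y \<partial>lborel) = exp (l'\<^sup>2 * t\<^sup>2 / 2)" for l'
    unfolding E_def normal_density_mult_exp_linear[OF t]
    using integrable_normal_density[OF t] integral_normal_density[OF t] by simp_all
  have pointwise: "normal_density 0 t y * max 0 (\<bar>y\<bar> - s) \<le> C * E l y + C * E (-l) y" for y
  proof -
    have "max 0 (\<bar>y\<bar> - s) \<le> exp (l * (\<bar>y\<bar> - s)) / (exp 1 * l)" by (rule max_0_le_exp[OF l])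
    also have "exp (l * (\<bar>y\<bar> - s)) = exp (l * \<bar>y\<bar>) * exp (- (l * s))"
      by (simp add: exp_add[symmetric] algebra_simps)
    also have "exp (l * \<bar>y\<bar>) \<le> exp (l * y) + exp ((-l) * y)"
      by (cases "y \<ge> 0") (auto simp: add_increasing add_increasing2)
    finally have "max 0 (\<bar>y\<bar> - s) \<le> C * exp (l * y) + C * exp ((-l) * y)"
      using l by (simp add: C_def divide_right_mono mult_right_mono field_simps)
    then have "normal_density 0 t y * max 0 (\<bar>y\<bar> - s)
        \<le> normal_density 0 t y * (C * exp (l * y) + C * exp ((-l) * y))"
      by (rule mult_left_mono) simp
    then show ?thesis
      unfolding E_def by (simp only: distrib_left mult.left_commute)
  qed
  have "(\<integral>y. normal_density 0 t y * max 0 (\<bar>y\<bar> - s) \<partial>lborel)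
      \<le> (\<integral>y. C * E l y + C * E (-l) y \<partial>lborel)"
    by (rule integral_mono[OF int]) (use E pointwise in auto)
  also have "\<dots> = 2 * C * exp (l\<^sup>2 * t\<^sup>2 / 2)"
    using E by simp
  also have "\<dots> = 2 * exp (l\<^sup>2 * t\<^sup>2 / 2 - l * s) / (exp 1 * l)"
    unfolding C_def exp_diff by (simp add: exp_minus field_simps)
  finally show "(\<integral>y. normal_density 0 t y * max 0 (\<bar>y\<bar> - s) \<partial>lborel)
        \<le> 2 * exp (l\<^sup>2 * t\<^sup>2 / 2 - l * s) / (exp 1 * l)" .
qed

text \<open>The exponential moment bound above, taken at \<open>l = s d\<close>.\<close>

lemma gauss_tmpl_excess:
  fixes v :: "real^'n::finite"
  assumes v: "norm v \<le> 1" and s: "s > 0"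
  shows gauss_tmpl_integrable_excess: "integrable gauss_tmpl (\<lambda>\<nu>. max 0 (\<bar>v \<bullet> \<nu>\<bar> - s))"
    and gauss_tmpl_integral_excess_le: "(\<integral>\<nu>. max 0 (\<bar>v \<bullet> \<nu>\<bar> - s) \<partial>gauss_tmpl)
       \<le> 2 * exp (- s\<^sup>2 * real CARD('n) / 2) / (exp 1 * s * real CARD('n))"
proof -
  define d where "d = real CARD('n)"
  have d: "d > 0" unfolding d_def by simp
  have "integrable gauss_tmpl (\<lambda>\<nu>. max 0 (\<bar>v \<bullet> \<nu>\<bar> - s)) \<and>
        (\<integral>\<nu>. max 0 (\<bar>v \<bullet> \<nu>\<bar> - s) \<partial>gauss_tmpl) \<le> 2 * exp (- s\<^sup>2 * d / 2) / (exp 1 * s * d)"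
  proof (cases "v = 0")
    case True
    then show ?thesis using s d by simp
  next
    case False
    define t where "t = norm v * coord_sd CARD('n)"
    define l where "l = s * d"
    have t: "t > 0" unfolding t_def using False coord_sd_pos[of "CARD('n)"] by simp
    have l: "l > 0" unfolding l_def using s d by simp
    have "t\<^sup>2 = (norm v)\<^sup>2 * (1 / d)"
      unfolding t_def coord_sd_card d_def using d by (simp add: power_mult_distrib power_divide d_def)
    also have "\<dots> \<le> 1 / d"
      using v d by (intro mult_left_le_one_le) (auto simp: power_le_one)
    finally have "l\<^sup>2 * t\<^sup>2 / 2 - l * s \<le> - s\<^sup>2 * d / 2"
      using mult_left_mono[of "t\<^sup>2" "1 / d" "l\<^sup>2"] d unfolding l_def
      by (simp add: power2_eq_square field_simps)
    then have "2 * exp (l\<^sup>2 * t\<^sup>2 / 2 - l * s) / (exp 1 * l) \<le> 2 * exp (- s\<^sup>2 * d / 2) / (exp 1 * s * d)"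
      using l by (simp add: divide_right_mono l_def mult.assoc)
    moreover note gauss_tmpl_integral_inner[OF False, of "\<lambda>y. max 0 (\<bar>y\<bar> - s)"]
      normal_density_excess[OF t l, of s]
    ultimately show ?thesis using s unfolding t_def by simp
  qed
  then show "integrable gauss_tmpl (\<lambda>\<nu>. max 0 (\<bar>v \<bullet> \<nu>\<bar> - s))"
    and "(\<integral>\<nu>. max 0 (\<bar>v \<bullet> \<nu>\<bar> - s) \<partial>gauss_tmpl)
       \<le> 2 * exp (- s\<^sup>2 * real CARD('n) / 2) / (exp 1 * s * real CARD('n))"
    unfolding d_def by auto
qed

lemma gauss_tmpl_integrable_indicator_mult:
  fixes c :: "real^'n::finite" and h :: "real^'n \<Rightarrow> real"
  assumes A: "A \<in> sets borel" and h[measurable]: "h \<in> borel_measurable borel"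
    and h_le: "\<And>\<nu>. \<bar>h \<nu>\<bar> \<le> \<bar>c \<bullet> \<nu>\<bar>"
  shows "integrable gauss_tmpl (\<lambda>\<nu>. indicator A \<nu> * h \<nu>)"
  by (rule Bochner_Integration.integrable_bound[OF gauss_tmpl_integrable_abs_inner[of c]])
    (use A h_le in \<open>auto simp: indicator_def abs_mult\<close>)

lemma max_eq_mean_plus_half_abs_diff: "max (\<alpha>::real) \<beta> = (\<alpha> + \<beta>) / 2 + \<bar>\<alpha> - \<beta>\<bar> / 2"
  by (cases "\<alpha> \<le> \<beta>") (auto simp: max_def abs_if field_simps)

text \<open>On the symmetric set \<open>{|\<nu>|\<^sup>2 < s}\<close> the mean part of the maximum integrates to zero.\<close>

lemma gauss_tmpl_truncated_max:
  fixes a b :: "real^'n::finite" and s :: real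
  shows gauss_tmpl_integrable_truncated_max:
      "integrable gauss_tmpl (\<lambda>\<nu>. indicator {\<nu>. (norm \<nu>)\<^sup>2 < s} \<nu> * max (a \<bullet> \<nu>) (b \<bullet> \<nu>))"
    and gauss_tmpl_integral_truncated_max:
      "(\<integral>\<nu>. indicator {\<nu>. (norm \<nu>)\<^sup>2 < s} \<nu> * max (a \<bullet> \<nu>) (b \<bullet> \<nu>) \<partial>gauss_tmpl)
       = (\<integral>\<nu>. indicator {\<nu>. (norm \<nu>)\<^sup>2 < s} \<nu> * \<bar>((1/2) *\<^sub>R (a - b)) \<bullet> \<nu>\<bar> \<partial>gauss_tmpl)"
proof -
  define A where "A = {\<nu>::real^'n. (norm \<nu>)\<^sup>2 < s}"
  have A: "A \<in> sets borel" unfolding A_def by measurable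
  define c where "c = (1/2) *\<^sub>R (a + b)"
  define v where "v = (1/2) *\<^sub>R (a - b)"
  have split: "(\<lambda>\<nu>. indicator A \<nu> * max (a \<bullet> \<nu>) (b \<bullet> \<nu>))
      = (\<lambda>\<nu>. indicator A \<nu> * (c \<bullet> \<nu>) + indicator A \<nu> * \<bar>v \<bullet> \<nu>\<bar>)"
    unfolding max_eq_mean_plus_half_abs_diff
    by (rule ext) (simp add: c_def v_def inner_add_left inner_diff_left field_simps)
  have "integrable gauss_tmpl (\<lambda>\<nu>. indicator A \<nu> * (c \<bullet> \<nu>))"
    by (rule gauss_tmpl_integrable_indicator_mult[OF A, of _ c]) auto
  moreover have "integrable gauss_tmpl (\<lambda>\<nu>. indicator A \<nu> * \<bar>v \<bullet> \<nu>\<bar>)"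
    by (rule gauss_tmpl_integrable_indicator_mult[OF A, of _ v]) auto
  moreover have "(\<integral>\<nu>. indicator A \<nu> * (c \<bullet> \<nu>) \<partial>gauss_tmpl) = 0"
    by (rule gauss_tmpl_integral_odd) (use A in \<open>measurable, auto simp: A_def indicator_def\<close>)
  ultimately show "integrable gauss_tmpl (\<lambda>\<nu>. indicator {\<nu>. (norm \<nu>)\<^sup>2 < s} \<nu> * max (a \<bullet> \<nu>) (b \<bullet> \<nu>))"
    and "(\<integral>\<nu>. indicator {\<nu>. (norm \<nu>)\<^sup>2 < s} \<nu> * max (a \<bullet> \<nu>) (b \<bullet> \<nu>) \<partial>gauss_tmpl)
       = (\<integral>\<nu>. indicator {\<nu>. (norm \<nu>)\<^sup>2 < s} \<nu> * \<bar>((1/2) *\<^sub>R (a - b)) \<bullet> \<nu>\<bar> \<partial>gauss_tmpl)"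
    unfolding A_def[symmetric] v_def[symmetric] split by simp_all
qed

lemma gauss_tmpl_integral_truncated_abs_inner:
  fixes v :: "real^'n::finite" and s :: real
  shows "(\<integral>\<nu>. indicator {\<nu>. (norm \<nu>)\<^sup>2 < s} \<nu> * \<bar>v \<bullet> \<nu>\<bar> \<partial>gauss_tmpl)
       = norm v * coord_sd CARD('n) * sqrt (2 / pi)
         - (\<integral>\<nu>. indicator {\<nu>. s \<le> (norm \<nu>)\<^sup>2} \<nu> * \<bar>v \<bullet> \<nu>\<bar> \<partial>gauss_tmpl)"
proof -
  define A where "A = {\<nu>::real^'n. (norm \<nu>)\<^sup>2 < s}"
  define B where "B = {\<nu>::real^'n. s \<le> (norm \<nu>)\<^sup>2}"
  have A: "A \<in> sets borel" and B: "B \<in> sets borel" unfolding A_def B_def by measurable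
  have "norm v * coord_sd CARD('n) * sqrt (2 / pi) = (\<integral>\<nu>. \<bar>v \<bullet> \<nu>\<bar> \<partial>gauss_tmpl)"
    by (rule gauss_tmpl_integral_abs_inner[symmetric])
  also have "\<dots> = (\<integral>\<nu>. indicator A \<nu> * \<bar>v \<bullet> \<nu>\<bar> + indicator B \<nu> * \<bar>v \<bullet> \<nu>\<bar> \<partial>gauss_tmpl)"
    by (rule Bochner_Integration.integral_cong) (auto simp: A_def B_def indicator_def)
  also have "\<dots> = (\<integral>\<nu>. indicator A \<nu> * \<bar>v \<bullet> \<nu>\<bar> \<partial>gauss_tmpl) + (\<integral>\<nu>. indicator B \<nu> * \<bar>v \<bullet> \<nu>\<bar> \<partial>gauss_tmpl)"
    using gauss_tmpl_integrable_indicator_mult[OF A, of _ v] gauss_tmpl_integrable_indicator_mult[OF B, of _ v]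
    by simp
  finally show ?thesis unfolding A_def B_def by simp
qed

definition tail_moment :: "real^'n \<Rightarrow> real \<Rightarrow> real" where
  "tail_moment v s = (\<integral>\<nu>. indicator {\<nu>. s \<le> (norm \<nu>)\<^sup>2} \<nu> * \<bar>v \<bullet> \<nu>\<bar> \<partial>gauss_tmpl)"

lemma tail_moment_nonneg: "0 \<le> tail_moment v s"
  unfolding tail_moment_def by (rule integral_nonneg_AE) (auto intro!: AE_I2)

lemma gauss_tmpl_integral_truncated_kernel:
  fixes a b :: "real^'n::finite" and s :: real
  shows "(\<integral>\<nu>. indicator {\<nu>. (norm \<nu>)\<^sup>2 < s} \<nu> * (s - max (a \<bullet> \<nu>) (b \<bullet> \<nu>)) \<partial>gauss_tmpl)
       = s * (1 - measure gauss_tmpl {\<nu>::real^'n. s \<le> (norm \<nu>)\<^sup>2})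
         - norm ((1/2) *\<^sub>R (a - b)) * coord_sd CARD('n) * sqrt (2 / pi)
         + tail_moment ((1/2) *\<^sub>R (a - b)) s"
proof -
  interpret Q: prob_space "gauss_tmpl :: (real^'n) measure" by (rule prob_space_gauss_tmpl)
  define A where "A = {\<nu>::real^'n. (norm \<nu>)\<^sup>2 < s}"
  define B where "B = {\<nu>::real^'n. s \<le> (norm \<nu>)\<^sup>2}"
  have B: "B \<in> sets gauss_tmpl" unfolding B_def by measurable
  define v where "v = (1/2) *\<^sub>R (a - b)"
  have "A = space gauss_tmpl - B" by (auto simp: A_def B_def)
  then have const: "(\<integral>\<nu>. indicator A \<nu> * s \<partial>gauss_tmpl) = s * (1 - measure gauss_tmpl B)"
    using Q.prob_compl[OF B] by simp
  have "integrable gauss_tmpl (\<lambda>\<nu>. indicator A \<nu> * s)"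
    unfolding A_def by (rule Q.integrable_const_bound[where B="\<bar>s\<bar>"]) (auto simp: indicator_def)
  then have "(\<integral>\<nu>. indicator A \<nu> * (s - max (a \<bullet> \<nu>) (b \<bullet> \<nu>)) \<partial>gauss_tmpl)
      = (\<integral>\<nu>. indicator A \<nu> * s \<partial>gauss_tmpl) - (\<integral>\<nu>. indicator A \<nu> * max (a \<bullet> \<nu>) (b \<bullet> \<nu>) \<partial>gauss_tmpl)"
    using gauss_tmpl_integrable_truncated_max[of s a b]
    by (simp add: right_diff_distrib A_def)
  also have "\<dots> = s * (1 - measure gauss_tmpl B) - (\<integral>\<nu>. indicator A \<nu> * \<bar>v \<bullet> \<nu>\<bar> \<partial>gauss_tmpl)"
    unfolding const unfolding A_def v_def gauss_tmpl_integral_truncated_max ..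
  also have "\<dots> = s * (1 - measure gauss_tmpl B) - norm v * coord_sd CARD('n) * sqrt (2 / pi)
      + tail_moment v s"
    unfolding A_def gauss_tmpl_integral_truncated_abs_inner by (simp add: tail_moment_def)
  finally show ?thesis unfolding A_def B_def v_def .
qed

lemma tail_moment_le:
  fixes v :: "real^'n::finite"
  assumes v: "norm v \<le> 1" and s: "s > 0"
  shows "tail_moment v s \<le> s * measure gauss_tmpl {\<nu>::real^'n. s \<le> (norm \<nu>)\<^sup>2}
           + 2 * exp (- s\<^sup>2 * real CARD('n) / 2) / (exp 1 * s * real CARD('n))"
proof -
  interpret Q: prob_space "gauss_tmpl :: (real^'n) measure" by (rule prob_space_gauss_tmpl)
  define B where "B = {\<nu>::real^'n. s \<le> (norm \<nu>)\<^sup>2}"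
  have [measurable]: "B \<in> sets borel" unfolding B_def by measurable
  have i1: "integrable gauss_tmpl (\<lambda>\<nu>. indicator B \<nu> * \<bar>v \<bullet> \<nu>\<bar>)"
    by (rule gauss_tmpl_integrable_indicator_mult[of _ _ v]) auto
  have i2: "integrable gauss_tmpl (\<lambda>\<nu>. indicator B \<nu> * s)"
    by (rule Q.integrable_const_bound[where B=s]) (use s in \<open>auto simp: indicator_def\<close>)
  have "tail_moment v s - s * measure gauss_tmpl B
      = (\<integral>\<nu>. indicator B \<nu> * \<bar>v \<bullet> \<nu>\<bar> - indicator B \<nu> * s \<partial>gauss_tmpl)"
    unfolding tail_moment_def B_def[symmetric] using i1 i2 by (simp add: mult.commute)
  also have "\<dots> \<le> (\<integral>\<nu>. max 0 (\<bar>v \<bullet> \<nu>\<bar> - s) \<partial>gauss_tmpl)"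
    by (rule integral_mono) (use i1 i2 gauss_tmpl_integrable_excess[OF v s] in \<open>auto simp: indicator_def\<close>)
  also have "\<dots> \<le> 2 * exp (- s\<^sup>2 * real CARD('n) / 2) / (exp 1 * s * real CARD('n))"
    by (rule gauss_tmpl_integral_excess_le[OF v s])
  finally show ?thesis unfolding B_def by simp
qed

section \<open>Measurability of continuous matrix expressions\<close>

lemma continuous_on_matrix_vector_mult [continuous_intros]:
  fixes f :: "'a::topological_space \<Rightarrow> real^'n^'m" and g :: "'a \<Rightarrow> real^'n"
  assumes "continuous_on S f" "continuous_on S g"
  shows "continuous_on S (\<lambda>x. f x *v g x)"
  unfolding matrix_vector_mult_def
  by (intro continuous_on_vec_lambda continuous_intros continuous_on_compose2[OF continuous_on_component] assms) auto

lemma continuous_on_matrix_matrix_mult [continuous_intros]: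
  fixes f :: "'a::topological_space \<Rightarrow> real^'n^'m" and g :: "'a \<Rightarrow> real^'k^'n"
  assumes "continuous_on S f" "continuous_on S g"
  shows "continuous_on S (\<lambda>x. f x ** g x)"
  unfolding matrix_matrix_mult_def
  by (intro continuous_on_vec_lambda continuous_intros continuous_on_compose2[OF continuous_on_component] assms) auto

lemma continuous_on_transpose [continuous_intros]:
  fixes f :: "'a::topological_space \<Rightarrow> real^'n^'m"
  assumes "continuous_on S f"
  shows "continuous_on S (\<lambda>x. transpose (f x))"
  unfolding transpose_def
  by (intro continuous_on_vec_lambda continuous_intros continuous_on_compose2[OF continuous_on_component] assms) auto

lemma continuous_on_vector_matrix_mult [continuous_intros]:
  fixes f :: "'a::topological_space \<Rightarrow> real^'m" and g :: "'a \<Rightarrow> real^'n^'m"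
  assumes "continuous_on S f" "continuous_on S g"
  shows "continuous_on S (\<lambda>x. f x v* g x)"
  unfolding vector_matrix_mult_def
  by (intro continuous_on_vec_lambda continuous_intros continuous_on_compose2[OF continuous_on_component] assms) auto

definition refines_borel :: "'a::topological_space measure \<Rightarrow> bool" where
  "refines_borel M \<longleftrightarrow> (\<lambda>x. x) \<in> measurable M borel"

lemma refines_borel_measurable: "refines_borel M \<Longrightarrow> f \<in> borel_measurable borel \<Longrightarrow> f \<in> borel_measurable M"
  unfolding refines_borel_def by (drule (1) measurable_comp) (simp add: comp_def)

lemma refines_borel_continuous_on:
  "refines_borel M \<Longrightarrow> continuous_on UNIV f \<Longrightarrow> f \<in> borel_measurable M"
  by (rule refines_borel_measurable) (auto intro: borel_measurable_continuous_onI)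

lemma refines_borel_sets_eq: "sets M = sets borel \<Longrightarrow> refines_borel M"
  unfolding refines_borel_def by (simp add: measurable_cong_sets[of M borel borel borel])

lemma refines_borel_pair_measure:
  fixes M :: "'a::second_countable_topology measure" and N :: "'b::second_countable_topology measure"
  assumes "refines_borel M" "refines_borel N"
  shows "refines_borel (M \<Otimes>\<^sub>M N)"
proof -
  have "(\<lambda>p. (fst p, snd p)) \<in> measurable (M \<Otimes>\<^sub>M N) (borel \<Otimes>\<^sub>M borel)"
    using assms unfolding refines_borel_def
    by (intro measurable_Pair) (auto intro: measurable_comp[OF measurable_fst, simplified comp_def]
        measurable_comp[OF measurable_snd, simplified comp_def])
  then show ?thesis unfolding refines_borel_def borel_prod by simp
qed

lemma integrable_bounded_continuous_on:
  fixes f :: "'a::topological_space \<Rightarrow> real"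
  assumes "finite_measure M" "refines_borel M" "continuous_on UNIV f"
    and "\<And>x. x \<in> space M \<Longrightarrow> norm (f x) \<le> B"
  shows "integrable M f"
  using finite_measure.integrable_const_bound[OF assms(1), of f B] assms refines_borel_continuous_on
  by blast

section \<open>Haar measure on the orthogonal group\<close>

lemma orth_group_haarD:
  assumes "orth_group_haar G \<mu>"
  shows "prob_space \<mu>" "space \<mu> = G" "sets \<mu> = sets (restrict_space borel G)"
    "\<And>g. g \<in> G \<Longrightarrow> orthogonal_matrix g"
    "\<And>g h. g \<in> G \<Longrightarrow> h \<in> G \<Longrightarrow> g ** h \<in> G"
    "\<And>g. g \<in> G \<Longrightarrow> transpose g \<in> G"
    "\<And>g A. g \<in> G \<Longrightarrow> A \<in> sets \<mu> \<Longrightarrow> emeasure \<mu> ((\<lambda>h. g ** h) -` A \<inter> G) = emeasure \<mu> A"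
  using assms unfolding orth_group_haar_def by auto

lemma refines_borel_haar: "orth_group_haar (G :: (real^'n^'n) set) \<mu> \<Longrightarrow> refines_borel \<mu>"
  unfolding refines_borel_def
  by (subst measurable_cong_sets[OF orth_group_haarD(3) refl]) (auto intro: measurable_restrict_space1)

lemma space_pair_haar: "orth_group_haar G \<mu> \<Longrightarrow> space (\<mu> \<Otimes>\<^sub>M \<mu>) = G \<times> G"
  by (simp add: space_pair_measure orth_group_haarD(2))

lemma
  fixes G :: "(real^'n^'n) set"
  assumes grp: "orth_group_haar G \<mu>" and g: "g \<in> G"
  shows measurable_haar_left_mult: "(\<lambda>h. g ** h) \<in> measurable \<mu> \<mu>"
    and distr_haar_left_mult: "distr \<mu> \<mu> (\<lambda>h. g ** h) = \<mu>"
proof -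
  note B = orth_group_haarD[OF grp]
  have "(\<lambda>h::real^'n^'n. g ** h) \<in> borel_measurable borel"
    by (intro borel_measurable_continuous_onI continuous_intros)
  then have "(\<lambda>h. g ** h) \<in> measurable (restrict_space borel G) (restrict_space borel G)"
    by (rule measurable_restrict_space3) (use B(5) g in auto)
  then show m: "(\<lambda>h. g ** h) \<in> measurable \<mu> \<mu>"
    using measurable_cong_sets[OF B(3) B(3)] by simp
  show "distr \<mu> \<mu> (\<lambda>h. g ** h) = \<mu>"
    by (rule measure_eqI) (use emeasure_distr[OF m] B(2) B(7)[OF g] in auto)
qed

lemma integral_haar_left_mult:
  fixes f :: "real^'n^'n \<Rightarrow> real"
  assumes grp: "orth_group_haar G \<mu>" and g: "g \<in> G" and f: "f \<in> borel_measurable \<mu>"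
  shows "(\<integral>h. f (g ** h) \<partial>\<mu>) = (\<integral>h. f h \<partial>\<mu>)"
  using integral_distr[OF measurable_haar_left_mult[OF grp g] f] distr_haar_left_mult[OF grp g] by simp

text \<open>Inversion invariance, derived from left invariance alone by the usual Fubini argument:
  \<open>\<integral>\<^sub>h f(h) = \<integral>\<^sub>g \<integral>\<^sub>h f(g\<^sup>T h) = \<integral>\<^sub>h \<integral>\<^sub>g f((h\<^sup>T g)\<^sup>T) = \<integral>\<^sub>g f(g\<^sup>T)\<close>.\<close>

lemma integral_haar_transpose:
  fixes f :: "real^'n^'n \<Rightarrow> real"
  assumes grp: "orth_group_haar G \<mu>" and f: "continuous_on UNIV f"
    and f_le: "\<And>g. g \<in> G \<Longrightarrow> \<bar>f g\<bar> \<le> B"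
  shows "(\<integral>g. f (transpose g) \<partial>\<mu>) = (\<integral>g. f g \<partial>\<mu>)"
proof -
  note Bs = orth_group_haarD[OF grp]
  interpret P: prob_space \<mu> by (rule Bs(1))
  interpret PP: pair_prob_space \<mu> \<mu> by unfold_locales
  have meas: "refines_borel \<mu>" "refines_borel (\<mu> \<Otimes>\<^sub>M \<mu>)"
    using refines_borel_haar[OF grp] by (auto intro: refines_borel_pair_measure)
  have cont: "continuous_on UNIV (\<lambda>g. f (transpose g))"
    "continuous_on UNIV (\<lambda>p. f (transpose (fst p) ** snd p))"
    by (intro continuous_on_compose2[OF f] continuous_intros; simp)+
  have "integrable (\<mu> \<Otimes>\<^sub>M \<mu>) (\<lambda>p. f (transpose (fst p) ** snd p))"
    by (rule integrable_bounded_continuous_on[OF _ meas(2) cont(2)])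
      (auto simp: space_pair_haar[OF grp] intro!: f_le Bs(5) Bs(6) PP.P.finite_measure_axioms)
  then have fubini: "(\<integral>g. (\<integral>h. f (transpose g ** h) \<partial>\<mu>) \<partial>\<mu>) = (\<integral>h. (\<integral>g. f (transpose g ** h) \<partial>\<mu>) \<partial>\<mu>)"
    by (intro PP.Fubini_integral[symmetric]) (simp add: split_beta')
  have "(\<integral>g. (\<integral>h. f (transpose g ** h) \<partial>\<mu>) \<partial>\<mu>) = (\<integral>g. (\<integral>h. f h \<partial>\<mu>) \<partial>\<mu>)"
    by (intro Bochner_Integration.integral_cong refl integral_haar_left_mult[OF grp]
        refines_borel_continuous_on[OF meas(1) f]) (simp add: Bs)
  then have "(\<integral>g. f g \<partial>\<mu>) = (\<integral>g. (\<integral>h. f (transpose g ** h) \<partial>\<mu>) \<partial>\<mu>)"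
    by (simp add: P.prob_space)
  also have "\<dots> = (\<integral>h. (\<integral>g. f (transpose (transpose h ** g)) \<partial>\<mu>) \<partial>\<mu>)"
    unfolding fubini by (simp add: matrix_transpose_mul)
  also have "\<dots> = (\<integral>h. (\<integral>g. f (transpose g) \<partial>\<mu>) \<partial>\<mu>)"
    by (intro Bochner_Integration.integral_cong refl integral_haar_left_mult[OF grp]
        refines_borel_continuous_on[OF meas(1) cont(1)]) (simp add: Bs)
  finally show ?thesis by (simp add: P.prob_space)
qed

lemma integral_pair_haar_transpose:
  fixes F :: "real^'n^'n \<Rightarrow> real^'n^'n \<Rightarrow> real"
  assumes grp: "orth_group_haar G \<mu>" and F: "continuous_on UNIV (\<lambda>p. F (fst p) (snd p))"
    and F_le: "\<And>g h. g \<in> G \<Longrightarrow> h \<in> G \<Longrightarrow> \<bar>F g h\<bar> \<le> B"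
  shows "(\<integral>p. F (transpose (fst p)) (transpose (snd p)) \<partial>(\<mu> \<Otimes>\<^sub>M \<mu>)) = (\<integral>p. F (fst p) (snd p) \<partial>(\<mu> \<Otimes>\<^sub>M \<mu>))"
proof -
  note Bs = orth_group_haarD[OF grp]
  interpret P: prob_space \<mu> by (rule Bs(1))
  interpret PP: pair_prob_space \<mu> \<mu> by unfold_locales
  have cont: "continuous_on UNIV (\<lambda>h. F a h)" "continuous_on UNIV (\<lambda>g. F g a)"
    "continuous_on UNIV (\<lambda>p. F (transpose (fst p)) (snd p))"
    "continuous_on UNIV (\<lambda>p. F (transpose (fst p)) (transpose (snd p)))" for a
    using continuous_on_compose2[OF F, of UNIV "\<lambda>h. (a, h)"] continuous_on_compose2[OF F, of UNIV "\<lambda>g. (g, a)"]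
      continuous_on_compose2[OF F, of UNIV "\<lambda>p. (transpose (fst p), snd p)"]
      continuous_on_compose2[OF F, of UNIV "\<lambda>p. (transpose (fst p), transpose (snd p))"]
    by (simp_all add: continuous_intros)
  have int: "integrable (\<mu> \<Otimes>\<^sub>M \<mu>) (\<lambda>(g, h). \<Phi> g h)"
    if "continuous_on UNIV (\<lambda>p. \<Phi> (fst p) (snd p))" "\<And>g h. g \<in> G \<Longrightarrow> h \<in> G \<Longrightarrow> \<bar>\<Phi> g h\<bar> \<le> B"
    for \<Phi> :: "real^'n^'n \<Rightarrow> real^'n^'n \<Rightarrow> real"
    using integrable_bounded_continuous_on[OF PP.P.finite_measure_axioms
        refines_borel_pair_measure[OF refines_borel_haar[OF grp] refines_borel_haar[OF grp]] that(1), of B]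
      that(2) by (force simp: split_beta' space_pair_haar[OF grp])
  have "(\<integral>p. F (transpose (fst p)) (transpose (snd p)) \<partial>(\<mu> \<Otimes>\<^sub>M \<mu>))
      = (\<integral>g. (\<integral>h. F (transpose g) (transpose h) \<partial>\<mu>) \<partial>\<mu>)"
    using PP.integral_fst[OF int[OF cont(4)]] F_le Bs(6) by (simp add: split_beta')
  also have "\<dots> = (\<integral>g. (\<integral>h. F (transpose g) h \<partial>\<mu>) \<partial>\<mu>)"
    by (rule Bochner_Integration.integral_cong[OF refl], rule integral_haar_transpose[OF grp cont(1), where B=B])
      (auto simp: Bs F_le)
  also have "\<dots> = (\<integral>h. (\<integral>g. F (transpose g) h \<partial>\<mu>) \<partial>\<mu>)"
    by (rule PP.Fubini_integral[symmetric], rule int[OF cont(3)]) (simp add: Bs F_le)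
  also have "\<dots> = (\<integral>h. (\<integral>g. F g h \<partial>\<mu>) \<partial>\<mu>)"
    by (rule Bochner_Integration.integral_cong[OF refl], rule integral_haar_transpose[OF grp cont(2), where B=B])
      (auto simp: Bs F_le)
  also have "\<dots> = (\<integral>p. F (fst p) (snd p) \<partial>(\<mu> \<Otimes>\<^sub>M \<mu>))"
    using PP.integral_snd[OF int[OF F F_le]] by (simp add: split_beta')
  finally show ?thesis .
qed

lemma norm_orthogonal_matrix_mult:
  assumes "orthogonal_matrix (g::real^'n^'n)"
  shows "norm (g *v t) = norm t"
  using assms by (simp add: orthogonal_transformation_matrix matrix_vector_mul_linear
      orthogonal_transformation_norm)

lemma norm_vector_orthogonal_matrix_mult:
  assumes "orthogonal_matrix (g::real^'n^'n)"
  shows "norm (x v* g) = norm x"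
  using norm_orthogonal_matrix_mult[of "transpose g" x] assms by (simp add: orthogonal_matrix_transpose)

lemma abs_inner_orthogonal_matrix_mult_le:
  assumes "orthogonal_matrix (g::real^'n^'n)" "norm x \<le> 1"
  shows "\<bar>x \<bullet> (g *v t)\<bar> \<le> norm t"
proof -
  have "\<bar>x \<bullet> (g *v t)\<bar> \<le> norm x * norm (g *v t)" by (rule Cauchy_Schwarz_ineq2)
  also have "\<dots> \<le> norm t" using assms by (simp add: mult_left_le_one_le norm_orthogonal_matrix_mult)
  finally show ?thesis .
qed

lemma d_G_eq_pair_integral:
  fixes G :: "(real^'n^'n) set" and x z :: "real^'n"
  assumes grp: "orth_group_haar G \<mu>" and x: "norm x \<le> 1" and z: "norm z \<le> 1"
  shows "d_G \<mu> x z = 1 / sqrt (2 * pi * real CARD('n)) * (\<integral>p. norm (x v* fst p - z v* snd p) \<partial>(\<mu> \<Otimes>\<^sub>M \<mu>))"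
proof -
  note Bs = orth_group_haarD[OF grp]
  interpret P: prob_space \<mu> by (rule Bs(1))
  interpret PP: pair_prob_space \<mu> \<mu> by unfold_locales
  define F where "F g h = norm (g *v x - h *v z)" for g h :: "real^'n^'n"
  have F_le: "\<bar>F g h\<bar> \<le> 2" if "g \<in> G" "h \<in> G" for g h
    using norm_triangle_ineq4[of "g *v x" "h *v z"] x z
    by (simp add: F_def norm_orthogonal_matrix_mult Bs(4) that)
  have cont: "continuous_on UNIV (\<lambda>p. F (fst p) (snd p))"
    unfolding F_def by (intro continuous_intros)
  have "(\<integral>p. norm (x v* fst p - z v* snd p) \<partial>(\<mu> \<Otimes>\<^sub>M \<mu>)) = (\<integral>p. F (fst p) (snd p) \<partial>(\<mu> \<Otimes>\<^sub>M \<mu>))"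
    using integral_pair_haar_transpose[OF grp cont F_le] by (simp add: F_def)
  also have "\<dots> = (\<integral>g. (\<integral>h. F g h \<partial>\<mu>) \<partial>\<mu>)"
    using PP.integral_fst[of F] integrable_bounded_continuous_on[OF PP.P.finite_measure_axioms
        refines_borel_pair_measure[OF refines_borel_haar[OF grp] refines_borel_haar[OF grp]] cont, of 2]
      F_le by (force simp: split_beta' space_pair_haar[OF grp])
  finally show ?thesis by (simp add: d_G_def F_def)
qed

section \<open>The kernel\<close>

lemma measure_pair_max_le:
  fixes f :: "'a \<Rightarrow> real" and h :: "'b \<Rightarrow> real"
  assumes M: "prob_space M" and N: "prob_space N"
    and [measurable]: "f \<in> borel_measurable M" "h \<in> borel_measurable N"
  shows "measure (M \<Otimes>\<^sub>M N) {p \<in> space (M \<Otimes>\<^sub>M N). max (f (fst p)) (h (snd p)) \<le> \<tau>}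
       = measure M {x \<in> space M. f x \<le> \<tau>} * measure N {y \<in> space N. h y \<le> \<tau>}"
proof -
  interpret M: prob_space M by (rule M)
  interpret N: prob_space N by (rule N)
  have "{p \<in> space (M \<Otimes>\<^sub>M N). max (f (fst p)) (h (snd p)) \<le> \<tau>}
      = {x \<in> space M. f x \<le> \<tau>} \<times> {y \<in> space N. h y \<le> \<tau>}"
    by (auto simp: space_pair_measure)
  moreover have "emeasure (M \<Otimes>\<^sub>M N) ({x \<in> space M. f x \<le> \<tau>} \<times> {y \<in> space N. h y \<le> \<tau>})
      = emeasure M {x \<in> space M. f x \<le> \<tau>} * emeasure N {y \<in> space N. h y \<le> \<tau>}"
    by (rule N.emeasure_pair_measure_Times) measurable
  ultimately show ?thesis
    by (simp add: measure_def enn2real_mult)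
qed

text \<open>Layer-cake formula: by Tonelli, \<open>\<integral>\<^sub>-\<^sub>s\<^sup>s P(X \<le> \<tau>) d\<tau> = E \<integral>\<^sub>-\<^sub>s\<^sup>s [X \<le> \<tau>] d\<tau> = E (s - X)\<close>.\<close>

lemma interval_integral_distribution_function:
  fixes X :: "'a \<Rightarrow> real"
  assumes P: "prob_space P" and X[measurable]: "X \<in> borel_measurable P"
    and X_le: "\<And>\<omega>. \<omega> \<in> space P \<Longrightarrow> \<bar>X \<omega>\<bar> \<le> s"
  shows "(LBINT \<tau>=-s..s. measure P {\<omega> \<in> space P. X \<omega> \<le> \<tau>}) = s - (\<integral>\<omega>. X \<omega> \<partial>P)"
proof -
  interpret P: prob_space P by (rule P)
  interpret PL: pair_sigma_finite P lborel by unfold_locales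
  have s: "0 \<le> s" using X_le P.not_empty by (auto intro: order_trans[OF abs_ge_zero])
  define F where "F \<tau> = measure P {\<omega> \<in> space P. X \<omega> \<le> \<tau>}" for \<tau>
  define J :: "'a \<Rightarrow> real \<Rightarrow> real" where "J \<omega> \<tau> = indicator {-s..s} \<tau> * indicator {\<omega>. X \<omega> \<le> \<tau>} \<omega>" for \<omega> \<tau>
  have F[measurable]: "F \<in> borel_measurable borel"
    by (rule borel_measurable_mono, rule monoI) (auto simp: F_def intro!: P.finite_measure_mono)
  have J[measurable]: "(\<lambda>(\<omega>, \<tau>). J \<omega> \<tau>) \<in> borel_measurable (P \<Otimes>\<^sub>M lborel)"
    unfolding J_def split_beta' by measurable
  have X_int: "integrable P X"
    by (rule P.integrable_const_bound[where B=s]) (auto intro: X_le)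
  have inner: "ennreal (indicator {-s..s} \<tau> * F \<tau>) = (\<integral>\<^sup>+\<omega>. ennreal (J \<omega> \<tau>) \<partial>P)" for \<tau>
  proof -
    have "{\<omega> \<in> space P. X \<omega> \<le> \<tau>} \<in> sets P" by measurable
    then have "ennreal (F \<tau>) = (\<integral>\<^sup>+\<omega>. indicator {\<omega> \<in> space P. X \<omega> \<le> \<tau>} \<omega> \<partial>P)"
      by (simp add: F_def P.emeasure_eq_measure[symmetric])
    also have "\<dots> = (\<integral>\<^sup>+\<omega>. ennreal (indicator {\<omega>. X \<omega> \<le> \<tau>} \<omega>) \<partial>P)"
      by (rule nn_integral_cong) (simp add: indicator_def)
    finally show ?thesis
      by (cases "\<tau> \<in> {-s..s}") (simp_all add: J_def)
  qed
  have "(\<integral>\<^sup>+\<tau>. ennreal (indicator {-s..s} \<tau> * F \<tau>) \<partial>lborel)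
      = (\<integral>\<^sup>+\<tau>. (\<integral>\<^sup>+\<omega>. ennreal (J \<omega> \<tau>) \<partial>P) \<partial>lborel)"
    by (simp only: inner)
  also have "\<dots> = (\<integral>\<^sup>+\<omega>. (\<integral>\<^sup>+\<tau>. ennreal (J \<omega> \<tau>) \<partial>lborel) \<partial>P)"
    by (rule PL.Fubini') measurable
  also have "\<dots> = (\<integral>\<^sup>+\<omega>. ennreal (s - X \<omega>) \<partial>P)"
  proof (rule nn_integral_cong)
    fix \<omega> assume "\<omega> \<in> space P"
    with X_le[of \<omega>] have "J \<omega> = indicator {X \<omega>..s}"
      by (intro ext) (auto simp: J_def indicator_def)
    with X_le[of \<omega>] \<open>\<omega> \<in> space P\<close> show "(\<integral>\<^sup>+\<tau>. ennreal (J \<omega> \<tau>) \<partial>lborel) = ennreal (s - X \<omega>)"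
      by (simp add: ennreal_indicator)
  qed
  also have "\<dots> = ennreal (\<integral>\<omega>. s - X \<omega> \<partial>P)"
  proof (rule nn_integral_eq_integral)
    show "integrable P (\<lambda>\<omega>. s - X \<omega>)" using X_int by simp
    show "AE \<omega> in P. 0 \<le> s - X \<omega>" using X_le by (intro AE_I2) (simp add: abs_le_iff)
  qed
  also have "(\<integral>\<omega>. s - X \<omega> \<partial>P) = s - (\<integral>\<omega>. X \<omega> \<partial>P)"
    using X_int by (simp add: P.prob_space)
  finally have "(\<integral>\<^sup>+\<tau>. ennreal (indicator {-s..s} \<tau> * F \<tau>) \<partial>lborel) = ennreal (s - (\<integral>\<omega>. X \<omega> \<partial>P))" .
  moreover have "(\<integral>\<omega>. X \<omega> \<partial>P) \<le> (\<integral>\<omega>. s \<partial>P)"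
    by (rule integral_mono[OF X_int]) (auto dest: X_le)
  moreover have "(\<lambda>\<tau>. indicator {-s..s} \<tau> * F \<tau>) \<in> borel_measurable lborel"
    by measurable
  ultimately have "(\<integral>\<tau>. indicator {-s..s} \<tau> * F \<tau> \<partial>lborel) = s - (\<integral>\<omega>. X \<omega> \<partial>P)"
    by (subst integral_eq_nn_integral) (simp_all add: F_def P.prob_space)
  then show ?thesis
    using s by (simp add: interval_integral_Icc set_lebesgue_integral_def F_def)
qed

lemma interval_integral_psi_Some:
  fixes G :: "(real^'n^'n) set" and x z t :: "real^'n"
  assumes grp: "orth_group_haar G \<mu>" and x: "norm x \<le> 1" and z: "norm z \<le> 1" and t: "norm t \<le> s"
  shows "(LBINT \<tau>=-s..s. psi \<mu> x (Some t) \<tau> * psi \<mu> z (Some t) \<tau>)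
       = s - (\<integral>p. max (x \<bullet> (fst p *v t)) (z \<bullet> (snd p *v t)) \<partial>(\<mu> \<Otimes>\<^sub>M \<mu>))"
proof -
  note Bs = orth_group_haarD[OF grp]
  interpret P: prob_space \<mu> by (rule Bs(1))
  interpret PP: pair_prob_space \<mu> \<mu> by unfold_locales
  have [measurable]: "(\<lambda>g. y \<bullet> (g *v t)) \<in> borel_measurable \<mu>" for y
    by (rule refines_borel_continuous_on[OF refines_borel_haar[OF grp]]) (intro continuous_intros)
  have "psi \<mu> x (Some t) \<tau> * psi \<mu> z (Some t) \<tau>
      = measure (\<mu> \<Otimes>\<^sub>M \<mu>) {p \<in> space (\<mu> \<Otimes>\<^sub>M \<mu>). max (x \<bullet> (fst p *v t)) (z \<bullet> (snd p *v t)) \<le> \<tau>}" for \<tau>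
    using measure_pair_max_le[OF Bs(1) Bs(1), of "\<lambda>g. x \<bullet> (g *v t)" "\<lambda>g. z \<bullet> (g *v t)"] by simp
  moreover have "(LBINT \<tau>=-s..s. measure (\<mu> \<Otimes>\<^sub>M \<mu>)
        {p \<in> space (\<mu> \<Otimes>\<^sub>M \<mu>). max (x \<bullet> (fst p *v t)) (z \<bullet> (snd p *v t)) \<le> \<tau>})
      = s - (\<integral>p. max (x \<bullet> (fst p *v t)) (z \<bullet> (snd p *v t)) \<partial>(\<mu> \<Otimes>\<^sub>M \<mu>))"
  proof (rule interval_integral_distribution_function)
    fix p assume "p \<in> space (\<mu> \<Otimes>\<^sub>M \<mu>)"
    then have "\<bar>x \<bullet> (fst p *v t)\<bar> \<le> norm t" "\<bar>z \<bullet> (snd p *v t)\<bar> \<le> norm t"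
      by (auto simp: space_pair_haar[OF grp] intro!: abs_inner_orthogonal_matrix_mult_le x z Bs(4))
    then show "\<bar>max (x \<bullet> (fst p *v t)) (z \<bullet> (snd p *v t))\<bar> \<le> s" using t by auto
  qed (simp_all add: PP.P.prob_space_axioms)
  ultimately show ?thesis by simp
qed

lemma interval_integral_psi_template:
  fixes G :: "(real^'n^'n) set" and x z \<nu> :: "real^'n" and \<epsilon> :: real
  assumes grp: "orth_group_haar G \<mu>" and x: "norm x \<le> 1" and z: "norm z \<le> 1" and \<epsilon>: "\<epsilon> > 0"
  shows "(LBINT \<tau>=-(1+\<epsilon>)..(1+\<epsilon>). psi \<mu> x (template \<epsilon> \<nu>) \<tau> * psi \<mu> z (template \<epsilon> \<nu>) \<tau>)
       = (\<integral>p. indicator {\<nu>. (norm \<nu>)\<^sup>2 < 1 + \<epsilon>} \<nu>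
               * (1 + \<epsilon> - max (x \<bullet> (fst p *v \<nu>)) (z \<bullet> (snd p *v \<nu>))) \<partial>(\<mu> \<Otimes>\<^sub>M \<mu>))"
proof (cases "(norm \<nu>)\<^sup>2 < 1 + \<epsilon>")
  case True
  note Bs = orth_group_haarD[OF grp]
  interpret P: prob_space \<mu> by (rule Bs(1))
  interpret PP: pair_prob_space \<mu> \<mu> by unfold_locales
  have "norm \<nu> \<le> 1 + \<epsilon>"
  proof (rule ccontr)
    assume "\<not> norm \<nu> \<le> 1 + \<epsilon>"
    then have "(1 + \<epsilon>) * 1 < norm \<nu> * norm \<nu>" using \<epsilon> by (intro mult_strict_mono) auto
    with True show False by (simp add: power2_eq_square)
  qed
  moreover have "template \<epsilon> \<nu> = Some \<nu>" using True by (simp add: template_def)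
  ultimately have "(LBINT \<tau>=-(1+\<epsilon>)..(1+\<epsilon>). psi \<mu> x (template \<epsilon> \<nu>) \<tau> * psi \<mu> z (template \<epsilon> \<nu>) \<tau>)
       = 1 + \<epsilon> - (\<integral>p. max (x \<bullet> (fst p *v \<nu>)) (z \<bullet> (snd p *v \<nu>)) \<partial>(\<mu> \<Otimes>\<^sub>M \<mu>))"
    by (simp only:) (rule interval_integral_psi_Some[OF grp x z])
  also have "\<dots> = (\<integral>p. 1 + \<epsilon> - max (x \<bullet> (fst p *v \<nu>)) (z \<bullet> (snd p *v \<nu>)) \<partial>(\<mu> \<Otimes>\<^sub>M \<mu>))"
  proof -
    have "\<bar>max (x \<bullet> (g *v \<nu>)) (z \<bullet> (h *v \<nu>))\<bar> \<le> norm \<nu>" if "g \<in> G" "h \<in> G" for g h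
      using abs_inner_orthogonal_matrix_mult_le[OF Bs(4)[OF that(1)] x, of \<nu>]
        abs_inner_orthogonal_matrix_mult_le[OF Bs(4)[OF that(2)] z, of \<nu>]
      unfolding max_def by auto
    then have "integrable (\<mu> \<Otimes>\<^sub>M \<mu>) (\<lambda>p. max (x \<bullet> (fst p *v \<nu>)) (z \<bullet> (snd p *v \<nu>)))"
      by (intro integrable_bounded_continuous_on[where B="norm \<nu>"] PP.P.finite_measure_axioms
          refines_borel_pair_measure refines_borel_haar[OF grp] continuous_intros)
        (auto simp: space_pair_haar[OF grp])
    then show ?thesis by (simp add: PP.P.prob_space)
  qed
  finally have "(LBINT \<tau>=-(1+\<epsilon>)..(1+\<epsilon>). psi \<mu> x (template \<epsilon> \<nu>) \<tau> * psi \<mu> z (template \<epsilon> \<nu>) \<tau>)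
       = (\<integral>p. 1 + \<epsilon> - max (x \<bullet> (fst p *v \<nu>)) (z \<bullet> (snd p *v \<nu>)) \<partial>(\<mu> \<Otimes>\<^sub>M \<mu>))" .
  with True show ?thesis by simp
qed (simp add: template_def)

lemma integrable_pair_gauss_truncated_max:
  fixes G :: "(real^'n^'n) set" and x z :: "real^'n"
  assumes grp: "orth_group_haar G \<mu>" and x: "norm x \<le> 1" and z: "norm z \<le> 1" and s: "s \<ge> 1"
  shows "integrable ((\<mu> \<Otimes>\<^sub>M \<mu>) \<Otimes>\<^sub>M gauss_tmpl)
           (\<lambda>(p, \<nu>). indicator {\<nu>. (norm \<nu>)\<^sup>2 < s} \<nu> * (s - max (x \<bullet> (fst p *v \<nu>)) (z \<bullet> (snd p *v \<nu>))))"
proof -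
  note Bs = orth_group_haarD[OF grp]
  interpret P: prob_space \<mu> by (rule Bs(1))
  interpret PP: pair_prob_space \<mu> \<mu> by unfold_locales
  interpret Q: prob_space "gauss_tmpl :: (real^'n) measure" by (rule prob_space_gauss_tmpl)
  interpret PQ: pair_prob_space "\<mu> \<Otimes>\<^sub>M \<mu>" "gauss_tmpl :: (real^'n) measure" by unfold_locales
  have "refines_borel ((\<mu> \<Otimes>\<^sub>M \<mu>) \<Otimes>\<^sub>M (gauss_tmpl :: (real^'n) measure))"
    by (intro refines_borel_pair_measure refines_borel_haar[OF grp] refines_borel_sets_eq sets_gauss_tmpl)
  then have [measurable]: "(\<lambda>(p, \<nu>). max (x \<bullet> (fst p *v \<nu>)) (z \<bullet> (snd p *v \<nu>)))
      \<in> borel_measurable ((\<mu> \<Otimes>\<^sub>M \<mu>) \<Otimes>\<^sub>M (gauss_tmpl :: (real^'n) measure))"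
    by (rule refines_borel_continuous_on) (simp add: split_beta', intro continuous_intros)
  have bound: "\<bar>indicator {\<nu>. (norm \<nu>)\<^sup>2 < s} \<nu> * (s - max (x \<bullet> (g *v \<nu>)) (z \<bullet> (h *v \<nu>)))\<bar> \<le> 2 * s"
    if gh: "g \<in> G" "h \<in> G" for g h :: "real^'n^'n" and \<nu> :: "real^'n"
  proof (cases "(norm \<nu>)\<^sup>2 < s")
    case True
    have "norm \<nu> \<le> s"
    proof (cases "norm \<nu> \<le> 1")
      case False
      then have "norm \<nu> * 1 \<le> norm \<nu> * norm \<nu>" by (intro mult_left_mono) auto
      with True show ?thesis by (simp add: power2_eq_square)
    qed (use s in simp)
    moreover have "\<bar>x \<bullet> (g *v \<nu>)\<bar> \<le> norm \<nu>" "\<bar>z \<bullet> (h *v \<nu>)\<bar> \<le> norm \<nu>"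
      using abs_inner_orthogonal_matrix_mult_le Bs(4) gh x z by auto
    ultimately show ?thesis using True by auto
  qed (use s in simp)
  show ?thesis
    by (rule PQ.P.integrable_const_bound[where B="2 * s"])
      (auto simp: space_pair_measure Bs(2) split_beta' intro!: AE_I2 bound)
qed

lemma
  fixes G :: "(real^'n^'n) set" and x z :: "real^'n" and \<epsilon> :: real
  assumes grp: "orth_group_haar G \<mu>" and x: "norm x \<le> 1" and z: "norm z \<le> 1" and \<epsilon>: "\<epsilon> > 0"
  shows integrable_interval_integral_psi_template:
      "integrable gauss_tmpl
         (\<lambda>\<nu>. LBINT \<tau>=-(1+\<epsilon>)..(1+\<epsilon>). psi \<mu> x (template \<epsilon> \<nu>) \<tau> * psi \<mu> z (template \<epsilon> \<nu>) \<tau>)"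
    and K_s_eq_pair_integral:
      "K_s \<mu> \<epsilon> x z = (\<integral>p. (\<integral>\<nu>. indicator {\<nu>. (norm \<nu>)\<^sup>2 < 1 + \<epsilon>} \<nu>
           * (1 + \<epsilon> - max ((x v* fst p) \<bullet> \<nu>) ((z v* snd p) \<bullet> \<nu>)) \<partial>gauss_tmpl) \<partial>(\<mu> \<Otimes>\<^sub>M \<mu>))"
    and integrable_pair_integral_truncated_max:
      "integrable (\<mu> \<Otimes>\<^sub>M \<mu>) (\<lambda>p. \<integral>\<nu>. indicator {\<nu>. (norm \<nu>)\<^sup>2 < 1 + \<epsilon>} \<nu>
           * (1 + \<epsilon> - max ((x v* fst p) \<bullet> \<nu>) ((z v* snd p) \<bullet> \<nu>)) \<partial>gauss_tmpl)"
proof -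
  interpret P: prob_space \<mu> by (rule orth_group_haarD(1)[OF grp])
  interpret PP: pair_prob_space \<mu> \<mu> by unfold_locales
  interpret Q: prob_space "gauss_tmpl :: (real^'n) measure" by (rule prob_space_gauss_tmpl)
  interpret PQ: pair_prob_space "\<mu> \<Otimes>\<^sub>M \<mu>" "gauss_tmpl :: (real^'n) measure" by unfold_locales
  define F where "F p \<nu> = indicator {\<nu>. (norm \<nu>)\<^sup>2 < 1 + \<epsilon>} \<nu>
      * (1 + \<epsilon> - max ((x v* fst p) \<bullet> \<nu>) ((z v* snd p) \<bullet> \<nu>))"
    for p :: "(real^'n^'n) \<times> (real^'n^'n)" and \<nu> :: "real^'n"
  have F: "integrable ((\<mu> \<Otimes>\<^sub>M \<mu>) \<Otimes>\<^sub>M gauss_tmpl) (\<lambda>(p, \<nu>). F p \<nu>)"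
    using integrable_pair_gauss_truncated_max[OF grp x z, of "1 + \<epsilon>"] \<epsilon>
    by (simp add: F_def dot_lmul_matrix)
  note template = interval_integral_psi_template[OF grp x z \<epsilon>]
  have F_eq: "(\<integral>p. indicator {\<nu>. (norm \<nu>)\<^sup>2 < 1 + \<epsilon>} \<nu> * (1 + \<epsilon> - max (x \<bullet> (fst p *v \<nu>)) (z \<bullet> (snd p *v \<nu>)))
      \<partial>(\<mu> \<Otimes>\<^sub>M \<mu>)) = (\<integral>p. F p \<nu> \<partial>(\<mu> \<Otimes>\<^sub>M \<mu>))" for \<nu>
    by (simp add: F_def dot_lmul_matrix)
  show "integrable gauss_tmpl
      (\<lambda>\<nu>. LBINT \<tau>=-(1+\<epsilon>)..(1+\<epsilon>). psi \<mu> x (template \<epsilon> \<nu>) \<tau> * psi \<mu> z (template \<epsilon> \<nu>) \<tau>)"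
    unfolding template F_eq using PQ.integrable_snd[OF F] .
  show "K_s \<mu> \<epsilon> x z = (\<integral>p. (\<integral>\<nu>. indicator {\<nu>. (norm \<nu>)\<^sup>2 < 1 + \<epsilon>} \<nu>
      * (1 + \<epsilon> - max ((x v* fst p) \<bullet> \<nu>) ((z v* snd p) \<bullet> \<nu>)) \<partial>gauss_tmpl) \<partial>(\<mu> \<Otimes>\<^sub>M \<mu>))"
    unfolding K_s_def template F_eq PQ.Fubini_integral[OF F] by (simp add: F_def[abs_def])
  show "integrable (\<mu> \<Otimes>\<^sub>M \<mu>) (\<lambda>p. \<integral>\<nu>. indicator {\<nu>. (norm \<nu>)\<^sup>2 < 1 + \<epsilon>} \<nu>
      * (1 + \<epsilon> - max ((x v* fst p) \<bullet> \<nu>) ((z v* snd p) \<bullet> \<nu>)) \<partial>gauss_tmpl)"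
    using PQ.integrable_fst[OF F] unfolding F_def .
qed

lemma
  fixes G :: "(real^'n^'n) set" and x z :: "real^'n" and \<epsilon> :: real
  assumes grp: "orth_group_haar G \<mu>" and x: "norm x \<le> 1" and z: "norm z \<le> 1" and \<epsilon>: "\<epsilon> > 0"
  shows K_s_eq:
      "K_s \<mu> \<epsilon> x z = (1 + \<epsilon> - d_G \<mu> x z)
         - (1 + \<epsilon>) * measure gauss_tmpl {\<nu>::real^'n. 1 + \<epsilon> \<le> (norm \<nu>)\<^sup>2}
         + (\<integral>p. tail_moment ((1/2) *\<^sub>R (x v* fst p - z v* snd p)) (1 + \<epsilon>) \<partial>(\<mu> \<Otimes>\<^sub>M \<mu>))"
    and integrable_tail_moment:
      "integrable (\<mu> \<Otimes>\<^sub>M \<mu>) (\<lambda>p. tail_moment ((1/2) *\<^sub>R (x v* fst p - z v* snd p)) (1 + \<epsilon>))"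
proof -
  note Bs = orth_group_haarD[OF grp]
  interpret P: prob_space \<mu> by (rule Bs(1))
  interpret PP: pair_prob_space \<mu> \<mu> by unfold_locales
  define s where "s = 1 + \<epsilon>"
  define v where "v p = (1/2) *\<^sub>R (x v* fst p - z v* snd p)" for p :: "(real^'n^'n) \<times> (real^'n^'n)"
  define c where "c = coord_sd CARD('n) * sqrt (2 / pi)"
  define PB where "PB = measure (gauss_tmpl :: (real^'n) measure) {\<nu>. s \<le> (norm \<nu>)\<^sup>2}"
  have inner: "(\<integral>\<nu>. indicator {\<nu>. (norm \<nu>)\<^sup>2 < s} \<nu> * (s - max ((x v* fst p) \<bullet> \<nu>) ((z v* snd p) \<bullet> \<nu>)) \<partial>gauss_tmpl)
      = s * (1 - PB) - norm (v p) * c + tail_moment (v p) s" for p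
    unfolding gauss_tmpl_integral_truncated_kernel by (simp add: v_def c_def PB_def mult.assoc)
  have v_int: "integrable (\<mu> \<Otimes>\<^sub>M \<mu>) (\<lambda>p. norm (v p))"
    using x z norm_vector_orthogonal_matrix_mult[OF Bs(4)]
    by (intro integrable_bounded_continuous_on[where B=1] PP.P.finite_measure_axioms
        refines_borel_pair_measure refines_borel_haar[OF grp])
      (auto simp: v_def space_pair_haar[OF grp] intro!: continuous_intros
        order_trans[OF norm_triangle_ineq4])
  have pair_int: "integrable (\<mu> \<Otimes>\<^sub>M \<mu>) (\<lambda>p. s * (1 - PB) - norm (v p) * c + tail_moment (v p) s)"
    using integrable_pair_integral_truncated_max[OF grp x z \<epsilon>] unfolding s_def[symmetric] inner .
  have "integrable (\<mu> \<Otimes>\<^sub>M \<mu>) (\<lambda>p. (s * (1 - PB) - norm (v p) * c + tail_moment (v p) s)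
      + norm (v p) * c - s * (1 - PB))"
    by (intro Bochner_Integration.integrable_diff Bochner_Integration.integrable_add pair_int
        Bochner_Integration.integrable_mult_left v_int) simp
  then have tail_int: "integrable (\<mu> \<Otimes>\<^sub>M \<mu>) (\<lambda>p. tail_moment (v p) s)"
    by simp
  then show "integrable (\<mu> \<Otimes>\<^sub>M \<mu>) (\<lambda>p. tail_moment ((1/2) *\<^sub>R (x v* fst p - z v* snd p)) (1 + \<epsilon>))"
    by (simp add: v_def s_def)
  have dG: "c * (\<integral>p. norm (v p) \<partial>(\<mu> \<Otimes>\<^sub>M \<mu>)) = d_G \<mu> x z"
  proof -
    have "c * (1/2) = 1 / sqrt (2 * pi * real CARD('n))"
      by (simp add: c_def coord_sd_card real_sqrt_divide real_sqrt_mult field_simps)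
    then show ?thesis
      by (simp add: d_G_eq_pair_integral[OF grp x z] v_def)
  qed
  have "K_s \<mu> \<epsilon> x z = (\<integral>p. s * (1 - PB) - norm (v p) * c + tail_moment (v p) s \<partial>(\<mu> \<Otimes>\<^sub>M \<mu>))"
    unfolding K_s_eq_pair_integral[OF grp x z \<epsilon>] s_def[symmetric] inner ..
  also have "\<dots> = (\<integral>p. s * (1 - PB) - norm (v p) * c \<partial>(\<mu> \<Otimes>\<^sub>M \<mu>)) + (\<integral>p. tail_moment (v p) s \<partial>(\<mu> \<Otimes>\<^sub>M \<mu>))"
    by (rule Bochner_Integration.integral_add) (use v_int tail_int in auto)
  also have "(\<integral>p. s * (1 - PB) - norm (v p) * c \<partial>(\<mu> \<Otimes>\<^sub>M \<mu>)) = s * (1 - PB) - c * (\<integral>p. norm (v p) \<partial>(\<mu> \<Otimes>\<^sub>M \<mu>))"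
    using v_int by (simp add: PP.P.prob_space mult.commute)
  finally show "K_s \<mu> \<epsilon> x z = (1 + \<epsilon> - d_G \<mu> x z)
         - (1 + \<epsilon>) * measure gauss_tmpl {\<nu>::real^'n. 1 + \<epsilon> \<le> (norm \<nu>)\<^sup>2}
         + (\<integral>p. tail_moment ((1/2) *\<^sub>R (x v* fst p - z v* snd p)) (1 + \<epsilon>) \<partial>(\<mu> \<Otimes>\<^sub>M \<mu>))"
    unfolding dG by (simp add: s_def PB_def v_def algebra_simps)
qed

section \<open>Estimates in the dimension\<close>

lemma ln_one_plus_le:
  fixes e :: real
  assumes e: "0 < e" "e < 1"
  shows "ln (1 + e) \<le> e - e\<^sup>2 / 4"
proof -
  define y where "y = e - e\<^sup>2 / 4"
  have "e\<^sup>2 \<le> e" using e by (simp add: power2_eq_square mult_left_le_one_le)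
  then have y: "3/4 * e \<le> y" "0 \<le> y" using e unfolding y_def by auto
  have "(3/4 * e)\<^sup>2 \<le> y\<^sup>2" using y e by (intro power_mono) auto
  then have "9/16 * e\<^sup>2 \<le> y\<^sup>2" by (simp add: power2_eq_square)
  then have "1 + e \<le> 1 + y + y\<^sup>2 / 2" using y_def zero_le_power2[of e] by linarith
  also have "\<dots> \<le> exp y" by (rule exp_lower_Taylor_quadratic[OF y(2)])
  finally have "ln (1 + e) \<le> ln (exp y)" using e by (subst ln_le_cancel_iff) auto
  then show ?thesis by (simp add: y_def)
qed

lemma one_plus_powr_mult_exp_le:
  fixes e d :: real
  assumes e: "0 < e" "e < 1" and d: "d \<ge> 0"
  shows "(1 + e) powr (d / 2) * exp (- d * e / 2) \<le> exp (- d * e\<^sup>2 / 8)"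
proof -
  have "(1 + e) powr (d / 2) = exp (d / 2 * ln (1 + e))" using e by (simp add: powr_def)
  also have "\<dots> \<le> exp (d / 2 * (e - e\<^sup>2 / 4))"
    using ln_one_plus_le[OF e] d by (simp add: mult_left_mono)
  finally have "(1 + e) powr (d / 2) * exp (- d * e / 2) \<le> exp (d / 2 * (e - e\<^sup>2 / 4)) * exp (- d * e / 2)"
    by (simp add: mult_right_mono)
  also have "\<dots> = exp (- d * e\<^sup>2 / 8)" by (simp add: exp_add[symmetric] field_simps)
  finally show ?thesis .
qed

lemma chernoff_bound_le_delta2:
  fixes e :: real
  assumes e: "0 < e" "e < 1"
  shows "(1 + e) * ((1 + e) powr (real n / 2) * exp (- real n * e / 2)) \<le> delta2 n e"
proof -
  have "(1 + e) * ((1 + e) powr (real n / 2) * exp (- real n * e / 2)) \<le> (1 + e) * exp (- real n * e\<^sup>2 / 8)"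
    using one_plus_powr_mult_exp_le[OF e, of "real n"] e by (intro mult_left_mono) auto
  also have "\<dots> \<le> delta2 n e" unfolding delta2_def by simp
  finally show ?thesis .
qed

lemma excess_bound_le:
  fixes s d :: real
  assumes s: "s \<ge> 1" and d: "d \<ge> 2"
  shows "2 * exp (- s\<^sup>2 * d / 2) / (exp 1 * s * d) \<le> exp (- d / 16) / sqrt d / 2"
proof -
  have sd: "sqrt d > 0" using d by simp
  have "2 * exp (- s\<^sup>2 * d / 2) / (exp 1 * s * d) \<le> 2 * exp (- d / 2) / (exp 1 * d)"
  proof (rule frac_le)
    have "1 \<le> s\<^sup>2" using s by (simp add: one_le_power)
    then show "2 * exp (- s\<^sup>2 * d / 2) \<le> 2 * exp (- d / 2)" using d by (simp add: mult_right_mono)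
    show "exp 1 * d \<le> exp 1 * s * d" using s d by (simp add: mult_right_mono)
  qed (use d in auto)
  also have "2 * exp (- d / 2) / (exp 1 * d)
      = (4 * exp (- d * 7 / 16)) * exp (- d / 16) / (2 * exp 1 * sqrt d * sqrt d)"
    using d by (simp add: exp_add[symmetric] field_simps)
  also have "\<dots> \<le> (exp 1 * sqrt d) * exp (- d / 16) / (2 * exp 1 * sqrt d * sqrt d)"
  proof (intro divide_right_mono mult_right_mono)
    have "4 \<le> exp (15 / 8 :: real)"
      using exp_lower_Taylor_quadratic[of "15/8::real"] by (simp add: power2_eq_square)
    then have "4 * exp (- 7 / 8 :: real) \<le> exp 1"
      by (simp add: exp_minus field_simps flip: exp_add)
    moreover have "exp (- d * 7 / 16) \<le> exp (- 7 / 8)" using d by simp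
    moreover have "exp 1 \<le> exp 1 * sqrt d" using d by simp
    ultimately show "4 * exp (- d * 7 / 16) \<le> exp 1 * sqrt d" by linarith
  qed (use sd in auto)
  also have "\<dots> = exp (- d / 16) / sqrt d / 2" using sd by (simp add: field_simps)
  finally show ?thesis .
qed

lemma excess_bound_le_delta1:
  fixes e s :: real
  assumes e: "0 < e" "e < 1" and n: "n \<ge> 2" and s: "s \<ge> 1"
  shows "2 * exp (- s\<^sup>2 * real n / 2) / (exp 1 * s * real n) \<le> delta1 n e"
proof -
  define d where "d = real n"
  have d: "d \<ge> 2" using n unfolding d_def by simp
  have "exp (- e * d / 2) * (1 + e) powr (d / 2) \<le> exp (- d * e\<^sup>2 / 16)"
  proof -
    have "exp (- e * d / 2) * (1 + e) powr (d / 2) \<le> exp (- d * e\<^sup>2 / 8)"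
      using one_plus_powr_mult_exp_le[OF e, of d] d by (simp add: mult.commute)
    also have "\<dots> \<le> exp (- d * e\<^sup>2 / 16)" using d by simp
    finally show ?thesis .
  qed
  then have "exp (- d * e\<^sup>2 / 16) / sqrt d / 2 \<le> delta1 n e"
    using d unfolding delta1_def d_def[symmetric] by (simp add: divide_right_mono field_simps)
  moreover have "exp (- d / 16) / sqrt d / 2 \<le> exp (- d * e\<^sup>2 / 16) / sqrt d / 2"
    using e d by (intro divide_right_mono) (auto simp: power_le_one mult_left_le_one_le)
  ultimately show ?thesis
    using excess_bound_le[OF s d] unfolding d_def[symmetric] by linarith
qed

lemma tendsto_inverse_sqrt_sequentially: "(\<lambda>d::nat. 1 / sqrt (real d)) \<longlonglongrightarrow> 0"
proof -
  have "(\<lambda>d::nat. inverse (sqrt (real d))) \<longlonglongrightarrow> 0"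
    by (rule tendsto_inverse_0_at_top, rule filterlim_compose[OF sqrt_at_top filterlim_real_sequentially])
  then show ?thesis by (simp add: divide_inverse)
qed

lemma tendsto_exp_neg_linear_sequentially: "c > 0 \<Longrightarrow> (\<lambda>d::nat. exp (- real d * c)) \<longlonglongrightarrow> 0"
  using filterlim_tendsto_pos_mult_at_top[OF tendsto_const _ filterlim_real_sequentially, of c]
  by (intro filterlim_compose[OF exp_at_bot]) (simp add: filterlim_uminus_at_top mult.commute)

lemma
  fixes e :: real
  assumes e: "0 < e" "e < 1"
  shows delta1_tendsto_0: "(\<lambda>d. delta1 d e) \<longlonglongrightarrow> 0"
    and delta2_tendsto_0: "(\<lambda>d. delta2 d e) \<longlonglongrightarrow> 0"
proof -
  have "(\<lambda>d::nat. exp (- real d * e\<^sup>2 / 16) / sqrt (real d)) \<longlonglongrightarrow> 0"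
    by (rule tendsto_sandwich[OF _ _ tendsto_const tendsto_inverse_sqrt_sequentially])
      (auto intro!: always_eventually divide_right_mono)
  moreover have "(\<lambda>d::nat. 1/2 * (exp (- e * real d / 2) * (1 + e) powr (real d / 2)) / sqrt (real d)) \<longlonglongrightarrow> 0"
  proof (rule tendsto_sandwich[OF _ _ tendsto_const tendsto_inverse_sqrt_sequentially])
    have "1/2 * (exp (- e * real d / 2) * (1 + e) powr (real d / 2)) \<le> 1" for d :: nat
    proof -
      have "exp (- e * real d / 2) * (1 + e) powr (real d / 2) \<le> exp (- real d * e\<^sup>2 / 8)"
        using one_plus_powr_mult_exp_le[OF e, of "real d"] by (simp add: mult.commute)
      also have "\<dots> \<le> 1" by simp
      finally show ?thesis by simp
    qed
    then show "\<forall>\<^sub>F d in sequentially. 1/2 * (exp (- e * real d / 2) * (1 + e) powr (real d / 2)) / sqrt (real d)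
        \<le> 1 / sqrt (real d)"
      by (intro always_eventually allI divide_right_mono) auto
  qed simp
  moreover have "(\<lambda>d::nat. (1 + e) * exp (- real d * e\<^sup>2 / 8)) \<longlonglongrightarrow> 0"
    using tendsto_mult_right_zero[OF tendsto_exp_neg_linear_sequentially[of "e\<^sup>2/8"], of "1+e"] e
    by (simp add: mult.assoc)
  ultimately show "(\<lambda>d. delta1 d e) \<longlonglongrightarrow> 0" "(\<lambda>d. delta2 d e) \<longlonglongrightarrow> 0"
    unfolding delta1_def delta2_def using tendsto_diff tendsto_add by fastforce+
qed

section \<open>Properties of the kernel\<close>

lemma
  fixes G :: "(real^'n^'n) set" and x z :: "real^'n" and \<epsilon> :: real
  assumes grp: "orth_group_haar G \<mu>" and x: "norm x \<le> 1" and z: "norm z \<le> 1"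
    and \<epsilon>: "0 < \<epsilon>" "\<epsilon> < 1" and dim: "CARD('n) \<ge> 2"
  shows K_s_lower_bound: "- delta2 CARD('n) \<epsilon> \<le> K_s \<mu> \<epsilon> x z - (1 + \<epsilon> - d_G \<mu> x z)"
    and K_s_upper_bound: "K_s \<mu> \<epsilon> x z - (1 + \<epsilon> - d_G \<mu> x z) \<le> delta1 CARD('n) \<epsilon>"
proof -
  note Bs = orth_group_haarD[OF grp]
  interpret P: prob_space \<mu> by (rule Bs(1))
  interpret PP: pair_prob_space \<mu> \<mu> by unfold_locales
  define s where "s = 1 + \<epsilon>"
  define v where "v p = (1/2) *\<^sub>R (x v* fst p - z v* snd p)" for p :: "(real^'n^'n) \<times> (real^'n^'n)"
  define PB where "PB = measure (gauss_tmpl :: (real^'n) measure) {\<nu>. s \<le> (norm \<nu>)\<^sup>2}"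
  define T where "T = 2 * exp (- s\<^sup>2 * real CARD('n) / 2) / (exp 1 * s * real CARD('n))"
  have s: "s > 1" using \<epsilon> unfolding s_def by simp
  have K: "K_s \<mu> \<epsilon> x z - (1 + \<epsilon> - d_G \<mu> x z) = - s * PB + (\<integral>p. tail_moment (v p) s \<partial>(\<mu> \<Otimes>\<^sub>M \<mu>))"
    using K_s_eq[OF grp x z \<epsilon>(1)] unfolding s_def PB_def v_def by (simp add: algebra_simps)
  have "s * PB \<le> s * (s powr (real CARD('n) / 2) * exp (- real CARD('n) * (s - 1) / 2))"
    using gauss_tmpl_norm_tail[OF s] s unfolding PB_def by (intro mult_left_mono) auto
  also have "\<dots> \<le> delta2 CARD('n) \<epsilon>"
    using chernoff_bound_le_delta2[OF \<epsilon>, of "CARD('n)"] unfolding s_def by simp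
  finally have PB: "s * PB \<le> delta2 CARD('n) \<epsilon>" .
  have "0 \<le> (\<integral>p. tail_moment (v p) s \<partial>(\<mu> \<Otimes>\<^sub>M \<mu>))"
    by (simp add: tail_moment_nonneg)
  with K PB show "- delta2 CARD('n) \<epsilon> \<le> K_s \<mu> \<epsilon> x z - (1 + \<epsilon> - d_G \<mu> x z)" by simp
  have "tail_moment (v p) s \<le> s * PB + T" if "p \<in> space (\<mu> \<Otimes>\<^sub>M \<mu>)" for p
  proof (rule tail_moment_le[of "v p" s, folded PB_def T_def])
    have "norm (x v* fst p - z v* snd p) \<le> norm (x v* fst p) + norm (z v* snd p)"
      by (rule norm_triangle_ineq4)
    with that x z show "norm (v p) \<le> 1"
      by (auto simp: v_def space_pair_haar[OF grp] norm_vector_orthogonal_matrix_mult Bs(4))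
  qed (use s in simp)
  then have "(\<integral>p. tail_moment (v p) s \<partial>(\<mu> \<Otimes>\<^sub>M \<mu>)) \<le> s * PB + T"
    using integral_mono_AE[OF integrable_tail_moment[OF grp x z \<epsilon>(1), folded s_def v_def],
        of "\<lambda>_. s * PB + T"]
    by (simp add: AE_I2 PP.P.prob_space)
  with K have "K_s \<mu> \<epsilon> x z - (1 + \<epsilon> - d_G \<mu> x z) \<le> T" by simp
  also have "T \<le> delta1 CARD('n) \<epsilon>"
    unfolding T_def using excess_bound_le_delta1[OF \<epsilon> dim] s by simp
  finally show "K_s \<mu> \<epsilon> x z - (1 + \<epsilon> - d_G \<mu> x z) \<le> delta1 CARD('n) \<epsilon>" .
qed

lemma K_s_sym: "K_s \<mu> \<epsilon> x z = K_s \<mu> \<epsilon> z x"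
  unfolding K_s_def by (simp add: mult.commute)

lemma psi_left_mult:
  fixes G :: "(real^'n^'n) set"
  assumes grp: "orth_group_haar G \<mu>" and g: "g \<in> G"
  shows "psi \<mu> (g *v x) t \<tau> = psi \<mu> x t \<tau>"
proof (cases t)
  case (Some t)
  note Bs = orth_group_haarD[OF grp]
  have g': "transpose g \<in> G" using Bs(6)[OF g] .
  have [measurable]: "(\<lambda>h. x \<bullet> (h *v t)) \<in> borel_measurable \<mu>"
    by (rule refines_borel_continuous_on[OF refines_borel_haar[OF grp]]) (intro continuous_intros)
  define S where "S = {h \<in> space \<mu>. x \<bullet> (h *v t) \<le> \<tau>}"
  have S: "S \<in> sets \<mu>" unfolding S_def by measurable
  have "(g *v x) \<bullet> (h *v t) = x \<bullet> ((transpose g ** h) *v t)" for h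
    using dot_lmul_matrix[of x "transpose g" "h *v t"] by (simp add: matrix_vector_mul_assoc)
  then have "(\<lambda>h. transpose g ** h) -` S \<inter> space \<mu> = {h \<in> space \<mu>. (g *v x) \<bullet> (h *v t) \<le> \<tau>}"
    unfolding S_def using Bs(2) Bs(5)[OF g'] by auto
  moreover have "measure \<mu> S = measure \<mu> ((\<lambda>h. transpose g ** h) -` S \<inter> space \<mu>)"
    using measure_distr[OF measurable_haar_left_mult[OF grp g'] S] distr_haar_left_mult[OF grp g'] by simp
  ultimately show ?thesis using Some S_def by simp
qed simp

lemma K_s_left_mult:
  fixes G :: "(real^'n^'n) set"
  assumes grp: "orth_group_haar G \<mu>" and g: "g \<in> G" and g': "g' \<in> G"
  shows "K_s \<mu> \<epsilon> (g *v x) (g' *v z) = K_s \<mu> \<epsilon> x z"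
  unfolding K_s_def psi_left_mult[OF grp g] psi_left_mult[OF grp g'] ..

lemma
  fixes G :: "(real^'n^'n) set"
  assumes grp: "orth_group_haar G \<mu>"
  shows borel_measurable_psi: "(\<lambda>\<tau>. psi \<mu> y t \<tau>) \<in> borel_measurable borel"
    and psi_nonneg: "0 \<le> psi \<mu> y t \<tau>"
    and psi_le_1: "psi \<mu> y t \<tau> \<le> 1"
proof -
  interpret P: prob_space \<mu> by (rule orth_group_haarD(1)[OF grp])
  show "0 \<le> psi \<mu> y t \<tau>" "psi \<mu> y t \<tau> \<le> 1" by (cases t; simp)+
  show "(\<lambda>\<tau>. psi \<mu> y t \<tau>) \<in> borel_measurable borel"
  proof (cases t)
    case (Some t)
    have [measurable]: "(\<lambda>h. y \<bullet> (h *v t)) \<in> borel_measurable \<mu>"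
      by (rule refines_borel_continuous_on[OF refines_borel_haar[OF grp]]) (intro continuous_intros)
    have "mono (\<lambda>\<tau>. measure \<mu> {h \<in> space \<mu>. y \<bullet> (h *v t) \<le> \<tau>})"
      by (rule monoI, rule P.finite_measure_mono) auto
    then show ?thesis using Some by (simp add: borel_measurable_mono)
  qed simp
qed

lemma interval_integral_gram_nonneg:
  fixes f :: "nat \<Rightarrow> real \<Rightarrow> real" and c :: "nat \<Rightarrow> real" and s :: real
  assumes f[measurable]: "\<And>i. f i \<in> borel_measurable borel" and f_le: "\<And>i \<tau>. \<bar>f i \<tau>\<bar> \<le> 1"
    and s: "0 \<le> s"
  shows "0 \<le> (\<Sum>i<m. \<Sum>j<m. c i * c j * (LBINT \<tau>=-s..s. f i \<tau> * f j \<tau>))"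
proof -
  define S where "S = {-s..s}"
  have S_int: "integrable lborel (indicator S :: real \<Rightarrow> real)"
    unfolding S_def by (rule integrable_real_indicator) (use s in \<open>auto simp: emeasure_lborel_Icc_eq\<close>)
  have int: "integrable lborel (\<lambda>\<tau>. c i * c j * (indicator S \<tau> * (f i \<tau> * f j \<tau>)))" for i j
  proof (intro Bochner_Integration.integrable_mult_right Bochner_Integration.integrable_bound[OF S_int])
    show "AE \<tau> in lborel. norm (indicator S \<tau> * (f i \<tau> * f j \<tau>)) \<le> norm (indicator S \<tau> :: real)"
      using f_le by (intro AE_I2) (auto simp: indicator_def abs_mult intro: mult_le_one)
  qed (simp add: S_def)
  have "(\<Sum>i<m. \<Sum>j<m. c i * c j * (LBINT \<tau>=-s..s. f i \<tau> * f j \<tau>))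
      = (\<Sum>i<m. \<Sum>j<m. (\<integral>\<tau>. c i * c j * (indicator S \<tau> * (f i \<tau> * f j \<tau>)) \<partial>lborel))"
    using s by (simp add: S_def interval_integral_Icc set_lebesgue_integral_def)
  also have "\<dots> = (\<integral>\<tau>. (\<Sum>i<m. \<Sum>j<m. c i * c j * (indicator S \<tau> * (f i \<tau> * f j \<tau>))) \<partial>lborel)"
    using int by (simp add: Bochner_Integration.integral_sum Bochner_Integration.integrable_sum)
  also have "\<dots> = (\<integral>\<tau>. indicator S \<tau> * (\<Sum>i<m. c i * f i \<tau>)\<^sup>2 \<partial>lborel)"
    by (simp add: power2_eq_square sum_product sum_distrib_left algebra_simps)
  also have "0 \<le> \<dots>" by (rule integral_nonneg_AE) (auto intro!: AE_I2)
  finally show ?thesis .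
qed

lemma K_s_psd:
  fixes G :: "(real^'n^'n) set" and y :: "nat \<Rightarrow> real^'n" and c :: "nat \<Rightarrow> real" and \<epsilon> :: real
  assumes grp: "orth_group_haar G \<mu>" and \<epsilon>: "\<epsilon> > 0" and y: "\<And>i. i < m \<Longrightarrow> norm (y i) \<le> 1"
  shows "0 \<le> (\<Sum>i<m. \<Sum>j<m. c i * c j * K_s \<mu> \<epsilon> (y i) (y j))"
proof -
  define \<Phi> where "\<Phi> i j \<nu> = (LBINT \<tau>=-(1+\<epsilon>)..(1+\<epsilon>). psi \<mu> (y i) (template \<epsilon> \<nu>) \<tau> * psi \<mu> (y j) (template \<epsilon> \<nu>) \<tau>)"
    for i j and \<nu> :: "real^'n"
  have int: "integrable gauss_tmpl (\<lambda>\<nu>. c i * c j * \<Phi> i j \<nu>)" if "i < m" "j < m" for i j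
    unfolding \<Phi>_def using integrable_interval_integral_psi_template[OF grp y y \<epsilon>] that by simp
  have "(\<Sum>i<m. \<Sum>j<m. c i * c j * K_s \<mu> \<epsilon> (y i) (y j))
      = (\<Sum>i<m. \<Sum>j<m. (\<integral>\<nu>. c i * c j * \<Phi> i j \<nu> \<partial>gauss_tmpl))"
    unfolding K_s_def \<Phi>_def by simp
  also have "\<dots> = (\<Sum>i<m. (\<integral>\<nu>. (\<Sum>j<m. c i * c j * \<Phi> i j \<nu>) \<partial>gauss_tmpl))"
    by (intro sum.cong refl Bochner_Integration.integral_sum[symmetric] int) auto
  also have "\<dots> = (\<integral>\<nu>. (\<Sum>i<m. \<Sum>j<m. c i * c j * \<Phi> i j \<nu>) \<partial>gauss_tmpl)"
    by (intro Bochner_Integration.integral_sum[symmetric] Bochner_Integration.integrable_sum int) auto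
  also have "0 \<le> \<dots>"
    unfolding \<Phi>_def using \<epsilon>
    by (intro integral_nonneg_AE AE_I2 interval_integral_gram_nonneg borel_measurable_psi[OF grp])
      (auto simp: psi_nonneg[OF grp] psi_le_1[OF grp] abs_le_iff intro: order_trans[OF _ psi_nonneg[OF grp]])
  finally show ?thesis .
qed

theorem theorem1:
  fixes G :: "(real^'n^'n) set" and \<mu> :: "(real^'n^'n) measure"
    and X :: "(real^'n) set" and \<epsilon> :: real and x z :: "real^'n"
  assumes dim: "CARD('n) \<ge> 2"
    and grp: "orth_group_haar G \<mu>"
    and X: "X \<subseteq> sphere 0 1"
    and eps: "0 < \<epsilon>" "\<epsilon> < 1"
    and xz: "x \<in> X" "z \<in> X"
  shows
    \<comment> \<open>(1)\<close>
    "(\<epsilon> - delta2 CARD('n) \<epsilon> \<le> K_s \<mu> \<epsilon> x z - (1 - d_G \<mu> x z) \<and>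
      K_s \<mu> \<epsilon> x z - (1 - d_G \<mu> x z) \<le> \<epsilon> + delta1 CARD('n) \<epsilon>)
     \<comment> \<open>(2)\<close>
     \<and> ((\<lambda>d. delta1 d \<epsilon>) \<longlonglongrightarrow> 0) \<and> ((\<lambda>d. delta2 d \<epsilon>) \<longlonglongrightarrow> 0)
     \<and> (- delta2 CARD('n) \<epsilon> \<le> K_s \<mu> \<epsilon> x z - ((1 + \<epsilon>) - d_G \<mu> x z) \<and>
        K_s \<mu> \<epsilon> x z - ((1 + \<epsilon>) - d_G \<mu> x z) \<le> delta1 CARD('n) \<epsilon>)
     \<comment> \<open>(3)\<close>
     \<and> K_s \<mu> \<epsilon> x z = K_s \<mu> \<epsilon> z x
     \<and> (\<forall>(m::nat) (y :: nat \<Rightarrow> real^'n) (c :: nat \<Rightarrow> real).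
          (\<forall>i<m. y i \<in> X) \<longrightarrow>
          0 \<le> (\<Sum>i<m. \<Sum>j<m. c i * c j * K_s \<mu> \<epsilon> (y i) (y j)))
     \<and> (\<forall>g\<in>G. \<forall>g'\<in>G. K_s \<mu> \<epsilon> (g *v x) (g' *v z) = K_s \<mu> \<epsilon> x z)"
proof -
  have unit: "norm w \<le> 1" if "w \<in> X" for w
    using X that by auto
  note bounds = K_s_lower_bound[OF grp unit[OF xz(1)] unit[OF xz(2)] eps dim]
    K_s_upper_bound[OF grp unit[OF xz(1)] unit[OF xz(2)] eps dim]
  show ?thesis
    using bounds
    by (intro conjI allI impI ballI delta1_tendsto_0[OF eps] delta2_tendsto_0[OF eps] K_s_sym
        K_s_psd[OF grp eps(1)] K_s_left_mult[OF grp]) (auto simp: unit)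
qed

end
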